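(* Let $X_1, X_2, \ldots$ be i.i.d.\ random variables with $\mathbb{P}\{X_1 = 2^k\} = 2^{-k}$, $k \in \mathbb{N}=\{1,2,\ldots\}$. For $m \geq 1$ let $S_m = X_1 + \cdots + X_m$ and set $S_0 = 0$. For $n \geq 1$ let $X_{1n} \geq X_{2n} \geq \cdots \geq X_{nn}$ be the decreasing rearrangement of $X_1,\ldots,X_n$, and for $0 \leq r < n$ let $S_{n,r} = \sum_{k=r+1}^n X_{kn}$. Then for any integers $0 \leq r < n$, as $x \to \infty$, \[ \mathbb{P}\{ S_{n,r} > x\} \sim \frac{2^{(r+1)\{\log_2 x\}}}{x^{r+1}} \binom{n}{r+1} \left( 1 + \mathbb{P}\left\{ S_{n-r-1} > x\left(1 - 2^{-\{\log_2 x\}}\right)\right\} (2^{r+1}-1) \right). \] In particular, for any $0 < \delta < 1$, \[ \lim_{x \to \infty,\ \{\log_2 x\} > \delta} \mathbb{P}\{S_{n,r} > x\} \frac{x^{r+1}}{2^{(r+1)\{\log_2 x\}}} = \binom{n}{r+1}. \]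
   Context: $\{y\}$ denotes the fractional part of a real number $y$. The notation $f(x) \sim g(x)$ means $f(x)/g(x) \to 1$. $S_{n,r}$ is the $r$-trimmed sum (the sum with the $r$ largest observations removed); $S_{n,0} = S_n$. *)

theory Defs
  imports "HOL-Probability.Probability" "HOL-Library.Landau_Symbols"
begin

definition partial_sum :: "(nat \<Rightarrow> 'a \<Rightarrow> real) \<Rightarrow> nat \<Rightarrow> 'a \<Rightarrow> real" where
  "partial_sum X m \<omega> = (\<Sum>i\<in>{1..m}. X i \<omega>)"

definition decr_rearr :: "(nat \<Rightarrow> 'a \<Rightarrow> real) \<Rightarrow> nat \<Rightarrow> 'a \<Rightarrow> real list" where
  "decr_rearr X n \<omega> = rev (sort (map (\<lambda>i. X i \<omega>) [1..<n+1]))"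

definition trimmed_sum :: "(nat \<Rightarrow> 'a \<Rightarrow> real) \<Rightarrow> nat \<Rightarrow> nat \<Rightarrow> 'a \<Rightarrow> real" where
  "trimmed_sum X n r \<omega> = (\<Sum>k\<in>{r+1..n}. decr_rearr X n \<omega> ! (k - 1))"

end

theory Submission
  imports Defs "HOL-Combinatorics.Permutations"
begin

text \<open>
  Fix the dyadic level 2^m \<le> x < 2^(m+1) and put e = 2^-m = 2^frac(log2 x) / x. Up to O(e^(r+2)),
  the event S_{n,r} > x happens in one of two disjoint ways: r + 1 of the X_i are \<ge> 2^(m+1) and the
  others smaller, with probability ~ C(n,r+1) e^(r+1); or r + 1 of them are \<ge> 2^m but not all
  \<ge> 2^(m+1), while the others are < 2^m and sum to more than x - 2^m, which by independence has
  probability ~ C(n,r+1) (2^(r+1) - 1) e^(r+1) P{S_{n-r-1} > x - 2^m}. Every other way of exceeding x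
  needs r + 2 values \<ge> 2^(m-n) and so costs O(e^(r+2)). As x - 2^m = x (1 - 2^-frac(log2 x)), this is
  the asymptotic equivalence; if frac(log2 x) > \<delta>, the remaining tail is O(1/x) and vanishes.
\<close>

section \<open>Trimmed sums of finite sequences\<close>

lemma sum_le_sum_lessThan_if_antimono:
  fixes g :: "nat \<Rightarrow> real"
  assumes antimono: "\<And>a b. a \<le> b \<Longrightarrow> b < n \<Longrightarrow> g b \<le> g a"
    and P: "P \<subseteq> {..<n}" "card P = r"
  shows "sum g P \<le> sum g {..<r}"
proof (cases "r = 0")
  case True
  then have "P = {}" using P finite_subset by (metis card_0_eq finite_lessThan)
  then show ?thesis using True by simp
next
  case False
  have fin: "finite P" using P(1) finite_subset by blast
  have "card P \<le> card {..<n}" by (rule card_mono[OF _ P(1)]) simp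
  then have rn: "r \<le> n" using P by simp
  let ?c = "g (r-1)"
  have s1: "sum g P = sum g (P \<inter> {..<r}) + sum g (P - {..<r})" by (rule sum.Int_Diff[OF fin])
  have s2: "sum g {..<r} = sum g ({..<r} \<inter> P) + sum g ({..<r} - P)" by (rule sum.Int_Diff) simp
  have c1: "card ({..<r} - P) = card (P - {..<r})"
    using card_Diff_subset_Int[of "{..<r}" P] card_Diff_subset_Int[of P "{..<r}"] fin P(2)
    by (simp add: Int_commute)
  have b1: "sum g (P - {..<r}) \<le> card (P - {..<r}) * ?c"
    by (rule sum_bounded_above) (use P antimono in auto)
  have b2: "card ({..<r} - P) * ?c \<le> sum g ({..<r} - P)"
    by (rule sum_bounded_below) (use rn antimono False in auto)
  show ?thesis using s1 s2 b1 b2 c1 by (simp add: Int_commute)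
qed

lemma decr_rearr_antimono:
  assumes "a \<le> b" "b < n"
  shows "decr_rearr X n \<omega> ! b \<le> decr_rearr X n \<omega> ! a"
proof -
  define xs where "xs = map (\<lambda>i. X i \<omega>) [1..<n+1]"
  have len: "length (sort xs) = n" by (simp add: xs_def)
  have "decr_rearr X n \<omega> ! a = sort xs ! (n - Suc a)" "decr_rearr X n \<omega> ! b = sort xs ! (n - Suc b)"
    using assms len by (simp_all add: decr_rearr_def xs_def rev_nth)
  then show ?thesis using sorted_nth_mono[of "sort xs" "n - Suc b" "n - Suc a"] assms len by simp
qed

lemma decr_rearr_reindex:
  obtains h where "bij_betw h {..<n} {1..n}"
    and "\<And>K. K \<subseteq> {..<n} \<Longrightarrow> (\<Sum>k\<in>K. decr_rearr X n \<omega> ! k) = (\<Sum>i\<in>h ` K. X i \<omega>)"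
proof -
  define xs where "xs = map (\<lambda>i. X i \<omega>) [1..<n+1]"
  have len: "length xs = n" by (simp add: xs_def)
  have "mset (decr_rearr X n \<omega>) = mset xs" by (simp add: decr_rearr_def xs_def)
  then obtain p where p: "p permutes {..<length xs}" "permute_list p xs = decr_rearr X n \<omega>"
    by (rule mset_eq_permutation)
  define h where "h k = Suc (p k)" for k
  have nth: "decr_rearr X n \<omega> ! k = X (h k) \<omega>" if "k < n" for k
  proof -
    have "p k < n" using permutes_in_image[OF p(1), of k] that len by simp
    have "decr_rearr X n \<omega> ! k = xs ! (p k)" using p that len permute_list_nth[OF p(1), of k] by simp
    also have "\<dots> = X (Suc (p k)) \<omega>"
      unfolding xs_def using \<open>p k < n\<close> by (subst nth_map) (auto simp del: upt_Suc)
    finally show ?thesis unfolding h_def .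
  qed
  have bij: "bij_betw h {..<n} {1..n}"
  proof -
    have bp: "bij_betw p {..<n} {..<n}" using permutes_imp_bij[OF p(1)] len by simp
    have bS: "bij_betw Suc {..<n} {1..n}" by (simp add: bij_betw_def image_Suc_lessThan)
    show ?thesis unfolding h_def using bij_betw_trans[OF bp bS] by (simp add: comp_def)
  qed
  have "(\<Sum>k\<in>K. decr_rearr X n \<omega> ! k) = (\<Sum>i\<in>h ` K. X i \<omega>)" if K: "K \<subseteq> {..<n}" for K
  proof -
    have "inj_on h K" by (rule inj_on_subset[OF bij_betw_imp_inj_on[OF bij] K])
    then have "(\<Sum>i\<in>h ` K. X i \<omega>) = (\<Sum>k\<in>K. X (h k) \<omega>)" by (rule sum.reindex[unfolded comp_def])
    also have "\<dots> = (\<Sum>k\<in>K. decr_rearr X n \<omega> ! k)" using K nth by (intro sum.cong) auto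
    finally show ?thesis by simp
  qed
  with bij show ?thesis by (rule that)
qed

lemma trimmed_sum_eq_sum_atLeastLessThan:
  "trimmed_sum X n r \<omega> = (\<Sum>k\<in>{r..<n}. decr_rearr X n \<omega> ! k)"
proof -
  have "trimmed_sum X n r \<omega> = (\<Sum>k\<in>{Suc r..<Suc n}. decr_rearr X n \<omega> ! (k - 1))"
    unfolding trimmed_sum_def by (intro sum.cong) auto
  also have "\<dots> = (\<Sum>k\<in>{r..<n}. decr_rearr X n \<omega> ! k)" by (subst sum.shift_bounds_Suc_ivl) simp
  finally show ?thesis .
qed

lemma trimmed_sum_le_sum_Diff:
  assumes T: "T \<subseteq> {1..n}" "card T = r"
  shows "trimmed_sum X n r \<omega> \<le> (\<Sum>i\<in>{1..n}-T. X i \<omega>)"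
proof -
  obtain h where bij: "bij_betw h {..<n} {1..n}"
    and reindex: "\<And>K. K \<subseteq> {..<n} \<Longrightarrow> (\<Sum>k\<in>K. decr_rearr X n \<omega> ! k) = (\<Sum>i\<in>h ` K. X i \<omega>)"
    using decr_rearr_reindex[where n=n and X=X and \<omega>=\<omega>] by blast
  let ?y = "\<lambda>k. decr_rearr X n \<omega> ! k"
  have "r \<le> n" using T card_mono[of "{1..n}" T] by simp
  define P where "P = {k\<in>{..<n}. h k \<in> T}"
  have hP: "h ` P = T" using bij T unfolding P_def bij_betw_def by auto
  have "inj_on h P" by (rule inj_on_subset[OF bij_betw_imp_inj_on[OF bij]]) (auto simp: P_def)
  then have "card P = r" using card_image[of h P] hP T by simp
  moreover have P: "P \<subseteq> {..<n}" by (auto simp: P_def)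
  ultimately have "(\<Sum>k\<in>P. ?y k) \<le> (\<Sum>k<r. ?y k)"
    by (intro sum_le_sum_lessThan_if_antimono decr_rearr_antimono)
  then have "(\<Sum>i\<in>T. X i \<omega>) \<le> (\<Sum>k<r. ?y k)" using reindex[OF P] hP by simp
  moreover have "(\<Sum>i\<in>{1..n}. X i \<omega>) = (\<Sum>k<n. ?y k)"
    using reindex[of "{..<n}"] bij by (simp add: bij_betw_def)
  moreover have "(\<Sum>k<n. ?y k) = (\<Sum>k<r. ?y k) + trimmed_sum X n r \<omega>"
    unfolding trimmed_sum_eq_sum_atLeastLessThan
    using sum.atLeastLessThan_concat[of 0 r n ?y] \<open>r \<le> n\<close> by (simp add: lessThan_atLeast0)
  moreover have "(\<Sum>i\<in>{1..n}-T. X i \<omega>) = (\<Sum>i\<in>{1..n}. X i \<omega>) - (\<Sum>i\<in>T. X i \<omega>)"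
    using T by (simp add: sum_diff)
  ultimately show ?thesis by linarith
qed

lemma trimmed_sum_eq_sum_Diff:
  assumes "r \<le> n"
  obtains T where "T \<subseteq> {1..n}" "card T = r" "trimmed_sum X n r \<omega> = (\<Sum>i\<in>{1..n}-T. X i \<omega>)"
proof -
  obtain h where bij: "bij_betw h {..<n} {1..n}"
    and reindex: "\<And>K. K \<subseteq> {..<n} \<Longrightarrow> (\<Sum>k\<in>K. decr_rearr X n \<omega> ! k) = (\<Sum>i\<in>h ` K. X i \<omega>)"
    using decr_rearr_reindex[where n=n and X=X and \<omega>=\<omega>] by blast
  have inj: "inj_on h {..<n}" using bij by (rule bij_betw_imp_inj_on)
  have top: "h ` {..<r} \<subseteq> {1..n}" using bij assms unfolding bij_betw_def by auto
  have card: "card (h ` {..<r}) = r"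
    using inj_on_subset[OF inj, of "{..<r}"] assms by (simp add: card_image)
  have rest: "h ` {r..<n} = {1..n} - h ` {..<r}"
  proof -
    have "h ` {..<n} = {1..n}" using bij by (simp add: bij_betw_def)
    moreover have "{..<n} = {..<r} \<union> {r..<n}" using assms by auto
    moreover have "h ` {..<r} \<inter> h ` {r..<n} = {}"
      using inj assms unfolding inj_on_def
      by (auto, metis lessThan_iff less_le_trans not_le order_less_imp_le)
    ultimately show ?thesis by auto
  qed
  have "{r..<n} \<subseteq> {..<n}" by auto
  then have "trimmed_sum X n r \<omega> = (\<Sum>i\<in>{1..n} - h ` {..<r}. X i \<omega>)"
    using reindex rest by (simp add: trimmed_sum_eq_sum_atLeastLessThan)
  with top card show ?thesis by (rule that)
qed

lemma trimmed_sum_gt_iff: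
  assumes "r \<le> n"
  shows "x < trimmed_sum X n r \<omega> \<longleftrightarrow>
    (\<forall>T. T \<subseteq> {1..n} \<longrightarrow> card T = r \<longrightarrow> x < (\<Sum>i\<in>{1..n}-T. X i \<omega>))"
proof
  assume "x < trimmed_sum X n r \<omega>"
  then show "\<forall>T. T \<subseteq> {1..n} \<longrightarrow> card T = r \<longrightarrow> x < (\<Sum>i\<in>{1..n}-T. X i \<omega>)"
  proof (intro allI impI)
    fix T assume "T \<subseteq> {1..n}" "card T = r"
    from trimmed_sum_le_sum_Diff[OF this, of X \<omega>] \<open>x < trimmed_sum X n r \<omega>\<close>
    show "x < (\<Sum>i\<in>{1..n}-T. X i \<omega>)" by linarith
  qed
next
  assume "\<forall>T. T \<subseteq> {1..n} \<longrightarrow> card T = r \<longrightarrow> x < (\<Sum>i\<in>{1..n}-T. X i \<omega>)"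
  moreover obtain T where "T \<subseteq> {1..n}" "card T = r" "trimmed_sum X n r \<omega> = (\<Sum>i\<in>{1..n}-T. X i \<omega>)"
    using trimmed_sum_eq_sum_Diff[OF assms] .
  ultimately show "x < trimmed_sum X n r \<omega>" by simp
qed

lemma trimmed_sum_le_add_sum_Diff:
  assumes "T \<subseteq> {1..n}" "card T = r + 1" "i \<in> T"
  shows "trimmed_sum X n r \<omega> \<le> X i \<omega> + (\<Sum>j\<in>{1..n}-T. X j \<omega>)"
proof -
  have "finite T" using assms(1) finite_subset by blast
  then have "card (T - {i}) = r" using assms by simp
  moreover have "{1..n} - (T - {i}) = insert i ({1..n} - T)" using assms by auto
  moreover have "T - {i} \<subseteq> {1..n}" using assms by auto
  ultimately show ?thesis using trimmed_sum_le_sum_Diff[of "T - {i}" n r X \<omega>] \<open>i \<in> T\<close> by simp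
qed

lemma trimmed_sum_gt_if_many_large:
  assumes "r < n" "T \<subseteq> {1..n}" "card T = r + 1"
    and large: "\<forall>i\<in>T. t \<le> X i \<omega>" and "x < t" and nonneg: "\<forall>i\<in>{1..n}. 0 \<le> X i \<omega>"
  shows "x < trimmed_sum X n r \<omega>"
  unfolding trimmed_sum_gt_iff[OF less_imp_le[OF \<open>r < n\<close>]]
proof (intro allI impI)
  fix T' assume T': "T' \<subseteq> {1..n}" "card T' = r"
  have "\<not> T \<subseteq> T'"
    using assms(3) T' card_mono[of T' T] finite_subset[of T' "{1..n}"] by auto
  then obtain i where i: "i \<in> T" "i \<notin> T'" by auto
  then have "X i \<omega> \<le> (\<Sum>j\<in>{1..n}-T'. X j \<omega>)"
    using assms(2) nonneg by (intro member_le_sum) auto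
  then show "x < (\<Sum>j\<in>{1..n}-T'. X j \<omega>)" using large \<open>x < t\<close> i by fastforce
qed

lemma trimmed_sum_gt_if_boundary:
  assumes "r < n" and T: "T \<subseteq> {1..n}" "card T = r + 1"
    and ge: "\<forall>i\<in>T. a \<le> X i \<omega>" and lt: "\<forall>i\<in>{1..n}-T. X i \<omega> < a"
    and rest: "x - a < (\<Sum>i\<in>{1..n}-T. X i \<omega>)"
  shows "x < trimmed_sum X n r \<omega>"
  unfolding trimmed_sum_gt_iff[OF less_imp_le[OF \<open>r < n\<close>]]
proof (intro allI impI)
  fix T' assume T': "T' \<subseteq> {1..n}" "card T' = r"
  let ?I = "{1..n}"
  have fT: "finite T" "finite T'" using T T' finite_subset by auto
  have s1: "(\<Sum>i\<in>?I-T'. X i \<omega>) = (\<Sum>i\<in>T-T'. X i \<omega>) + (\<Sum>i\<in>(?I-T)-T'. X i \<omega>)"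
  proof -
    have "?I - T' = (T - T') \<union> ((?I-T)-T')" using T by auto
    then show ?thesis using sum.union_disjoint[of "T-T'" "(?I-T)-T'" "\<lambda>i. X i \<omega>"] fT by auto
  qed
  have s2: "(\<Sum>i\<in>?I-T. X i \<omega>) = (\<Sum>i\<in>(?I-T)\<inter>T'. X i \<omega>) + (\<Sum>i\<in>(?I-T)-T'. X i \<omega>)"
    by (rule sum.Int_Diff) simp
  have c: "card (T - T') = card ((?I-T)\<inter>T') + 1"
  proof -
    have "(?I-T)\<inter>T' = T' - T" using T' by auto
    moreover have "card (T - T') = card T - card (T \<inter> T')" "card (T' - T) = card T' - card (T' \<inter> T)"
      using fT by (simp_all add: card_Diff_subset_Int)
    moreover have "card (T' \<inter> T) \<le> card T'" using fT by (intro card_mono) auto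
    ultimately show ?thesis using T T' by (simp add: Int_commute)
  qed
  have "card (T-T') * a \<le> (\<Sum>i\<in>T-T'. X i \<omega>)"
    by (rule sum_bounded_below) (use ge in auto)
  moreover have "(\<Sum>i\<in>(?I-T)\<inter>T'. X i \<omega>) \<le> card ((?I-T)\<inter>T') * a"
    by (rule sum_bounded_above) (use lt in \<open>auto simp: less_imp_le\<close>)
  moreover have "real (card (T-T')) * a = real (card ((?I-T)\<inter>T')) * a + a"
    using c by (simp add: algebra_simps)
  ultimately show "x < (\<Sum>i\<in>?I-T'. X i \<omega>)" using s1 s2 rest by linarith
qed

lemma double_le_two_power: "n \<ge> 1 \<Longrightarrow> 2 * n \<le> (2::nat) ^ n"
proof (induction n)
  case (Suc k)
  then show ?case by (cases "k = 0") (auto intro: order.trans[OF _ power_increasing[of 1 k 2]])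
qed simp

lemma obtain_superset_with_card:
  assumes "H \<subseteq> I" "finite I" "card H \<le> r" "r \<le> card I"
  obtains T where "H \<subseteq> T" "T \<subseteq> I" "card T = r"
proof -
  have fH: "finite H" using assms finite_subset by blast
  have "r - card H \<le> card (I - H)" using assms fH by (simp add: card_Diff_subset)
  then obtain U where U: "U \<subseteq> I - H" "card U = r - card H" "finite U"
    by (rule obtain_subset_with_card_n)
  have "card (H \<union> U) = card H + card U" using U fH by (intro card_Un_disjoint) auto
  then show ?thesis using that[of "H \<union> U"] U assms by auto
qed

lemma power_two_le_if_gt_half:
  fixes k m :: nat
  assumes "(2::real) ^ m / 2 < 2 ^ k"
  shows "(2::real) ^ m \<le> 2 ^ k"
proof -
  have "(2::real) ^ m < 2 ^ (k + 1)" using assms by simp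
  then have "m < k + 1" by (rule power_less_imp_less_exp[rotated]) simp
  then show ?thesis by (intro power_increasing) auto
qed

lemma power_two_eq_if_between:
  fixes k m :: nat
  assumes "(2::real) ^ m \<le> 2 ^ k" "(2::real) ^ k < 2 ^ (m + 1)"
  shows "(2::real) ^ k = 2 ^ m"
proof -
  have "m \<le> k" using assms(1) by (rule power_le_imp_le_exp[rotated]) simp
  moreover have "k < m + 1" using assms(2) by (rule power_less_imp_less_exp[rotated]) simp
  ultimately show ?thesis by simp
qed

lemma sum_Diff_le_half_power:
  fixes f :: "nat \<Rightarrow> real"
  assumes small: "\<forall>i\<in>{1..n}-T. f i < 2 ^ (m - n)" and "1 \<le> n" "n \<le> m"
  shows "(\<Sum>i\<in>{1..n}-T. f i) \<le> 2 ^ m / 2"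
proof -
  define b where "b = (2::real) ^ (m - n)"
  have "(\<Sum>i\<in>{1..n}-T. f i) \<le> card ({1..n}-T) * b"
    by (rule sum_bounded_above) (use small in \<open>auto simp: b_def less_imp_le\<close>)
  also have "\<dots> \<le> n * b"
    using card_mono[of "{1..n}" "{1..n} - T"] unfolding b_def by (intro mult_right_mono) auto
  also have "2 * real n \<le> 2 ^ n"
    using of_nat_mono[OF double_le_two_power[OF \<open>1 \<le> n\<close>]] by simp
  then have "2 * (n * b) \<le> 2 ^ n * b"
    using mult_right_mono[of "2 * real n" "2 ^ n" b] unfolding b_def by simp
  then have "n * b \<le> 2 ^ m / 2" using \<open>n \<le> m\<close> unfolding b_def by (simp add: power_add[symmetric])
  finally show ?thesis .
qed

text \<open>For dyadic values with 2^m \<le> x < S_{n,r}, if at most r + 1 values reach 2^(m-n), the others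
  sum to at most 2^m / 2, so exactly r + 1 values exceed 2^m / 2 and hence are \<ge> 2^m.\<close>
lemma trimmed_sum_gt_few_large:
  fixes X :: "nat \<Rightarrow> 'a \<Rightarrow> real" and \<omega> :: 'a and n m :: nat
  defines "H \<equiv> {i\<in>{1..n}. 2 ^ (m - n) \<le> X i \<omega>}"
  assumes "r < n" and dyadic: "\<forall>i\<in>{1..n}. \<exists>k::nat. X i \<omega> = 2 ^ k"
    and m: "n + 1 \<le> m" and x: "2 ^ m \<le> x" and gt: "x < trimmed_sum X n r \<omega>"
    and few: "card H \<le> r + 1"
  shows "card H = r + 1" "\<forall>i\<in>H. 2 ^ m \<le> X i \<omega>" "\<forall>i\<in>H. x < X i \<omega> + (\<Sum>j\<in>{1..n}-H. X j \<omega>)"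
proof -
  have H: "H \<subseteq> {1..n}" unfolding H_def by auto
  have small_rest: "(\<Sum>i\<in>{1..n}-T. X i \<omega>) \<le> 2 ^ m / 2" if "H \<subseteq> T" for T
    using that \<open>r < n\<close> m by (intro sum_Diff_le_half_power) (auto simp: H_def)
  show card_H: "card H = r + 1"
  proof (rule ccontr)
    assume "card H \<noteq> r + 1"
    then obtain T where T: "H \<subseteq> T" "T \<subseteq> {1..n}" "card T = r"
      using obtain_superset_with_card[OF H, of r] few \<open>r < n\<close> by auto
    have "x < (\<Sum>i\<in>{1..n}-T. X i \<omega>)"
      using trimmed_sum_le_sum_Diff[OF T(2,3), of X \<omega>] gt by linarith
    then show False using small_rest[OF T(1)] x zero_less_power[of "2::real" m] by linarith
  qed
  show near: "\<forall>i\<in>H. x < X i \<omega> + (\<Sum>j\<in>{1..n}-H. X j \<omega>)"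
    using trimmed_sum_le_add_sum_Diff[OF H card_H, of _ X \<omega>] gt by force
  show "\<forall>i\<in>H. 2 ^ m \<le> X i \<omega>"
  proof
    fix i assume "i \<in> H"
    then obtain k where "X i \<omega> = 2 ^ k" using dyadic H by blast
    moreover have "2 ^ m / 2 < X i \<omega>" using near \<open>i \<in> H\<close> small_rest[of H] x by force
    ultimately show "2 ^ m \<le> X i \<omega>" using power_two_le_if_gt_half by simp
  qed
qed

lemma trimmed_sum_gt_cases:
  assumes "r < n" and dyadic: "\<forall>i\<in>{1..n}. \<exists>k::nat. X i \<omega> = 2 ^ k"
    and m: "n + 1 \<le> m" and x: "2 ^ m \<le> x" and gt: "x < trimmed_sum X n r \<omega>"
  shows "(\<exists>U. U \<subseteq> {1..n} \<and> card U = r + 2 \<and> (\<forall>i\<in>U. 2 ^ (m - n) \<le> X i \<omega>)) \<or>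
         (\<exists>T. T \<subseteq> {1..n} \<and> card T = r + 1 \<and> (\<forall>i\<in>T. 2 ^ (m + 1) \<le> X i \<omega>)) \<or>
         (\<exists>T. T \<subseteq> {1..n} \<and> card T = r + 1 \<and> (\<forall>i\<in>T. 2 ^ m \<le> X i \<omega>) \<and>
            \<not> (\<forall>i\<in>T. 2 ^ (m + 1) \<le> X i \<omega>) \<and>
            (\<forall>i\<in>{1..n}-T. X i \<omega> < 2 ^ m) \<and> x - 2 ^ m < (\<Sum>i\<in>{1..n}-T. X i \<omega>))"
proof -
  define H where "H = {i\<in>{1..n}. 2 ^ (m - n) \<le> X i \<omega>}"
  define H2 where "H2 = {i\<in>{1..n}. 2 ^ (m + 1) \<le> X i \<omega>}"
  have H: "finite H" "H \<subseteq> {1..n}" "finite H2" unfolding H_def H2_def by auto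
  consider "r + 2 \<le> card H" | "r + 1 \<le> card H2" | "card H \<le> r + 1" "card H2 \<le> r" by linarith
  then show ?thesis
  proof cases
    case 1
    then obtain U where "U \<subseteq> H" "card U = r + 2" by (meson obtain_subset_with_card_n)
    then show ?thesis unfolding H_def by blast
  next
    case 2
    then obtain T where "T \<subseteq> H2" "card T = r + 1" by (meson obtain_subset_with_card_n)
    then show ?thesis unfolding H2_def by blast
  next
    case 3
    note large = trimmed_sum_gt_few_large[OF assms 3(1)[unfolded H_def], folded H_def]
    have "\<not> (\<forall>i\<in>H. 2 ^ (m + 1) \<le> X i \<omega>)"
    proof
      assume "\<forall>i\<in>H. 2 ^ (m + 1) \<le> X i \<omega>"
      then have "H \<subseteq> H2" using H unfolding H2_def by auto
      from card_mono[OF H(3) this] show False using large(1) 3 by simp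
    qed
    then obtain i0 where i0: "i0 \<in> H" "X i0 \<omega> < 2 ^ (m + 1)" by force
    obtain k0 where "X i0 \<omega> = 2 ^ k0" using dyadic i0 H by blast
    then have "X i0 \<omega> = 2 ^ m" using power_two_eq_if_between[of m k0] large(2) i0 by auto
    then have "x - 2 ^ m < (\<Sum>i\<in>{1..n}-H. X i \<omega>)" using large(3) i0(1) by force
    moreover have "\<forall>i\<in>{1..n}-H. X i \<omega> < 2 ^ m"
    proof
      fix i assume "i \<in> {1..n} - H"
      then have "X i \<omega> < 2 ^ (m - n)" unfolding H_def by auto
      also have "\<dots> \<le> 2 ^ m" by (rule power_increasing) auto
      finally show "X i \<omega> < 2 ^ m" .
    qed
    ultimately show ?thesis using H large \<open>\<not> (\<forall>i\<in>H. 2 ^ (m + 1) \<le> X i \<omega>)\<close> by blast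
  qed
qed

lemma eq_level_set_if_pattern:
  fixes f :: "'a \<Rightarrow> 'b::linorder"
  assumes "T \<subseteq> I" "\<forall>i\<in>T. c \<le> f i" "\<forall>i\<in>I-T. f i < c"
  shows "T = {i\<in>I. c \<le> f i}"
proof
  show "T \<subseteq> {i\<in>I. c \<le> f i}" using assms(1,2) by auto
  show "{i\<in>I. c \<le> f i} \<subseteq> T" using assms(3) by (auto dest: leD)
qed

section \<open>Dyadic scales and limits\<close>

lemma obtain_least_power_two_ge:
  fixes t :: real
  assumes "1 < t"
  obtains j where "1 \<le> j" "t \<le> 2 ^ j" "\<And>k::nat. t \<le> 2 ^ k \<Longrightarrow> j \<le> k"
proof -
  define j where "j = (LEAST j. t \<le> (2::real) ^ j)"
  obtain N where "t < 2 ^ N" using real_arch_pow[of 2 t] by auto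
  then have tj: "t \<le> 2 ^ j" unfolding j_def using LeastI[of "\<lambda>j. t \<le> (2::real) ^ j" N] by simp
  then have "1 \<le> j" using assms by (cases j) auto
  moreover have "j \<le> k" if "t \<le> 2 ^ k" for k :: nat unfolding j_def using that by (rule Least_le)
  ultimately show ?thesis using tj that by blast
qed

lemma floor_log2_props:
  fixes x :: real
  assumes x: "2 ^ N \<le> x"
  defines "m \<equiv> nat \<lfloor>log 2 x\<rfloor>"
  shows "N \<le> m" "2 ^ m \<le> x" "x < 2 ^ (m + 1)"
    "2 powr (real k * frac (log 2 x)) = (x / 2 ^ m) ^ k"
    "x * (1 - 2 powr (- frac (log 2 x))) = x - 2 ^ m"
proof -
  have xpos: "x > 0" using less_le_trans[OF zero_less_power[of "2::real" N] x] by simp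
  define l where "l = log 2 x"
  have "real N \<le> l" unfolding l_def using xpos x
    by (subst le_log_iff) (auto simp: powr_realpow)
  then have fN: "int N \<le> \<lfloor>l\<rfloor>" by (simp add: le_floor_iff)
  then have mr: "real m = of_int \<lfloor>l\<rfloor>" unfolding m_def l_def by simp
  show "N \<le> m" using fN unfolding m_def l_def by simp
  have fl: "real m \<le> l" "l < real m + 1" using mr by linarith+
  have x2: "x = 2 powr l" unfolding l_def using xpos by simp
  have "(2::real) ^ m = 2 powr real m" by (simp add: powr_realpow)
  also have "\<dots> \<le> 2 powr l" using fl by simp
  finally show "2 ^ m \<le> x" using x2 by simp
  have "x < 2 powr (real m + 1)" using x2 fl by simp
  also have "2 powr (real m + 1) = (2::real) ^ (m + 1)" using powr_realpow[of 2 "m + 1"] by (simp add: add.commute)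
  finally show "x < 2 ^ (m + 1)" .
  have fr: "frac (log 2 x) = l - real m" using mr unfolding l_def frac_def by simp
  have d: "2 powr (l - real m) = x / 2 ^ m" using x2 by (simp add: powr_diff powr_realpow)
  show "2 powr (real k * frac (log 2 x)) = (x / 2 ^ m) ^ k"
    unfolding fr d[symmetric] by (simp add: powr_power)
  have "2 powr (- frac (log 2 x)) = inverse (2 powr (l - real m))" unfolding fr by (rule powr_minus)
  also have "\<dots> = 2 ^ m / x" using d by simp
  finally show "x * (1 - 2 powr (- frac (log 2 x))) = x - 2 ^ m" using xpos by (simp add: field_simps)
qed

lemma abs_divide_minus_one_le:
  fixes a b d l :: real
  assumes "\<bar>a - b\<bar> \<le> d" "l \<le> b" "0 < l"
  shows "\<bar>a / b - 1\<bar> \<le> d / l"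
proof -
  have "a / b - 1 = (a - b) / b" using assms by (simp add: field_simps)
  then have "\<bar>a / b - 1\<bar> = \<bar>a - b\<bar> / b" using assms by (simp add: abs_div)
  also have "\<dots> \<le> d / b" using assms by (intro divide_right_mono) auto
  also have "\<dots> \<le> d / l" using assms by (intro divide_left_mono) auto
  finally show ?thesis .
qed

lemma tendsto_if_abs_diff_le_div:
  fixes g :: "real \<Rightarrow> real"
  assumes "eventually (\<lambda>x. \<bar>g x - c\<bar> \<le> K / x) F" and "F \<le> at_top"
  shows "(g \<longlongrightarrow> c) F"
proof -
  have lim0: "((\<lambda>x. K / x) \<longlongrightarrow> 0) F"
    by (rule tendsto_mono[OF assms(2)])
      (rule tendsto_divide_0[OF tendsto_const filterlim_at_top_imp_at_infinity[OF filterlim_ident]])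
  show ?thesis
  proof (rule tendsto_sandwich[where f="\<lambda>x. c - K / x" and h="\<lambda>x. c + K / x"])
    show "eventually (\<lambda>x. c - K / x \<le> g x) F" "eventually (\<lambda>x. g x \<le> c + K / x) F"
      using assms(1) by (auto elim: eventually_mono simp: abs_le_iff)
    show "((\<lambda>x. c - K / x) \<longlongrightarrow> c) F" using tendsto_diff[OF tendsto_const lim0, of c] by simp
    show "((\<lambda>x. c + K / x) \<longlongrightarrow> c) F" using tendsto_add[OF tendsto_const lim0, of c] by simp
  qed
qed

section \<open>Independent variables with P{X = 2^k} = 2^-k\<close>

locale st_petersburg = prob_space M for M :: "'a measure" +
  fixes X :: "nat \<Rightarrow> 'a \<Rightarrow> real"
  assumes measurable_X: "\<And>i. i \<ge> 1 \<Longrightarrow> X i \<in> borel_measurable M"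
  and indep_X: "indep_vars (\<lambda>_. borel) X {1..}"
  and prob_X_eq_pow2: "\<And>i k. i \<ge> 1 \<Longrightarrow> k \<ge> 1 \<Longrightarrow> prob {\<omega> \<in> space M. X i \<omega> = 2 ^ k} = 1 / 2 ^ k"
begin

lemma prob_X_pow2_from:
  assumes i: "i \<ge> 1" and j: "j \<ge> 1"
  shows "prob {\<omega>\<in>space M. \<exists>k\<ge>j. X i \<omega> = 2 ^ k} = 2 / 2 ^ j"
proof -
  have [measurable]: "X i \<in> borel_measurable M" using measurable_X i by auto
  define A where "A k = {\<omega>\<in>space M. X i \<omega> = 2 ^ (k + j)}" for k
  have "A k \<in> events" for k unfolding A_def by measurable
  then have "range A \<subseteq> events" by auto
  moreover have "disjoint_family A"
    unfolding disjoint_family_on_def A_def by auto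
  ultimately have s: "(\<lambda>k. prob (A k)) sums prob (\<Union>k. A k)"
    by (rule finite_measure_UNION)
  have "(\<Union>k. A k) = {\<omega>\<in>space M. \<exists>k\<ge>j. X i \<omega> = 2 ^ k}"
  proof (intro set_eqI iffI)
    fix \<omega> assume "\<omega> \<in> (\<Union>k. A k)"
    then obtain k where "\<omega> \<in> space M" "X i \<omega> = 2 ^ (k + j)" unfolding A_def by auto
    then show "\<omega> \<in> {\<omega>\<in>space M. \<exists>k\<ge>j. X i \<omega> = 2 ^ k}" by (intro CollectI conjI exI[of _ "k + j"]) auto
  next
    fix \<omega> assume "\<omega> \<in> {\<omega>\<in>space M. \<exists>k\<ge>j. X i \<omega> = 2 ^ k}"
    then obtain k where "\<omega> \<in> space M" "k \<ge> j" "X i \<omega> = 2 ^ k" by auto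
    then have "\<omega> \<in> A (k - j)" unfolding A_def by simp
    then show "\<omega> \<in> (\<Union>k. A k)" by blast
  qed
  moreover have "prob (A k) = (1 / 2 ^ j) * (1 / 2) ^ k" for k
    unfolding A_def using prob_X_eq_pow2[OF i, of "k + j"] j by (simp add: power_add power_divide)
  ultimately have s2: "(\<lambda>k. (1 / 2 ^ j) * (1 / 2::real) ^ k) sums prob {\<omega>\<in>space M. \<exists>k\<ge>j. X i \<omega> = 2 ^ k}"
    using s by simp
  have "(\<lambda>k. (1 / 2 ^ j) * (1 / 2::real) ^ k) sums ((1 / 2 ^ j) * 2)"
    using geometric_sums[of "1 / 2::real"] by (intro sums_mult) auto
  from sums_unique2[OF s2 this] show ?thesis by simp
qed

lemma AE_X_pow2: assumes "i \<ge> 1" shows "AE \<omega> in M. \<exists>k\<ge>1. X i \<omega> = 2 ^ k"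
proof -
  have "prob {\<omega>\<in>space M. \<exists>k\<ge>1. X i \<omega> = 2 ^ k} = 1" using prob_X_pow2_from[of i 1] assms by simp
  from AE_prob_1[OF this] show ?thesis by auto
qed

lemma prob_X_ge_pow2:
  assumes i: "i \<ge> 1" and j: "j \<ge> 1"
  shows "prob {\<omega>\<in>space M. X i \<omega> \<ge> 2 ^ j} = 2 / 2 ^ j"
proof -
  have [measurable]: "X i \<in> borel_measurable M" using measurable_X i by auto
  have "prob {\<omega>\<in>space M. X i \<omega> \<ge> 2 ^ j} = prob {\<omega>\<in>space M. \<exists>k\<ge>j. X i \<omega> = (2::real) ^ k}"
  proof (rule finite_measure_eq_AE)
    show "AE \<omega> in M. (\<omega> \<in> {\<omega>\<in>space M. X i \<omega> \<ge> 2 ^ j}) = (\<omega> \<in> {\<omega>\<in>space M. \<exists>k\<ge>j. X i \<omega> = (2::real) ^ k})"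
      using AE_X_pow2[OF i] by eventually_elim (auto)
  qed measurable
  then show ?thesis using prob_X_pow2_from[OF i j] by simp
qed

lemma prob_all_X_in:
  assumes J: "finite J" "J \<subseteq> {1..}" and A: "\<And>i. i \<in> J \<Longrightarrow> A i \<in> sets borel"
  shows "prob {\<omega>\<in>space M. \<forall>i\<in>J. X i \<omega> \<in> A i} = (\<Prod>i\<in>J. prob {\<omega>\<in>space M. X i \<omega> \<in> A i})"
proof (cases "J = {}")
  case True then show ?thesis using prob_space by simp
next
  case False
  have "prob (\<Inter>i\<in>J. X i -` A i \<inter> space M) = (\<Prod>i\<in>J. prob (X i -` A i \<inter> space M))"
    by (rule indep_varsD[OF indep_X False J(1) J(2) A])
  moreover have "(\<Inter>i\<in>J. X i -` A i \<inter> space M) = {\<omega>\<in>space M. \<forall>i\<in>J. X i \<omega> \<in> A i}" using False by auto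
  moreover have "X i -` A i \<inter> space M = {\<omega>\<in>space M. X i \<omega> \<in> A i}" for i by auto
  ultimately show ?thesis by simp
qed

lemma X_law_sums:
  assumes i: "i \<ge> 1" and A: "A \<in> sets borel"
  shows "(\<lambda>k. if (2::real) ^ (k + 1) \<in> A then 1 / 2 ^ (k + 1) else 0) sums prob {\<omega>\<in>space M. X i \<omega> \<in> A}"
proof -
  have [measurable]: "X i \<in> borel_measurable M" using measurable_X i by auto
  have [measurable]: "A \<in> sets borel" by (rule A)
  define B where "B k = (if (2::real) ^ (k + 1) \<in> A then {\<omega>\<in>space M. X i \<omega> = 2 ^ (k + 1)} else {})" for k
  have Bev: "B k \<in> events" for k unfolding B_def by (cases "(2::real) ^ (k + 1) \<in> A") simp_all
  then have "range B \<subseteq> events" by auto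
  moreover have "disjoint_family B"
    unfolding disjoint_family_on_def B_def by auto
  ultimately have s: "(\<lambda>k. prob (B k)) sums prob (\<Union>k. B k)"
    by (rule finite_measure_UNION)
  have pB: "prob (B k) = (if (2::real) ^ (k + 1) \<in> A then 1 / 2 ^ (k + 1) else 0)" for k
    unfolding B_def using prob_X_eq_pow2[OF i, of "k + 1"] by simp
  have "prob (\<Union>k. B k) = prob {\<omega>\<in>space M. X i \<omega> \<in> A}"
  proof (rule finite_measure_eq_AE)
    show "AE \<omega> in M. (\<omega> \<in> (\<Union>k. B k)) = (\<omega> \<in> {\<omega>\<in>space M. X i \<omega> \<in> A})"
      using AE_X_pow2[OF i]
    proof eventually_elim
      case (elim \<omega>)
      then obtain k where k: "k \<ge> 1" "X i \<omega> = 2 ^ k" by auto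
      then have k': "X i \<omega> = 2 ^ ((k-1) + 1)" by simp
      show ?case
      proof
        assume "\<omega> \<in> (\<Union>k. B k)" then show "\<omega> \<in> {\<omega>\<in>space M. X i \<omega> \<in> A}"
          unfolding B_def by (auto split: if_splits)
      next
        assume "\<omega> \<in> {\<omega>\<in>space M. X i \<omega> \<in> A}" then have "\<omega> \<in> B (k-1)"
          unfolding B_def using k' by auto
        then show "\<omega> \<in> (\<Union>k. B k)" by blast
      qed
    qed
    show "(\<Union>k. B k) \<in> events" using Bev by auto
  qed measurable
  then show ?thesis using s pB by simp
qed

lemma distr_X_eq: assumes "i \<ge> 1" shows "distr M borel (X i) = distr M borel (X 1)"
proof (rule measure_eqI)
  fix A :: "real set" assume A: "A \<in> sets (distr M borel (X i))"
  then have A': "A \<in> sets borel" by simp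
  have "prob {\<omega>\<in>space M. X i \<omega> \<in> A} = prob {\<omega>\<in>space M. X 1 \<omega> \<in> A}"
    using sums_unique2[OF X_law_sums[OF assms A'] X_law_sums[of 1, OF _ A']] by simp
  moreover have "X i -` A \<inter> space M = {\<omega>\<in>space M. X i \<omega> \<in> A}" "X 1 -` A \<inter> space M = {\<omega>\<in>space M. X 1 \<omega> \<in> A}" by auto
  ultimately show "emeasure (distr M borel (X i)) A = emeasure (distr M borel (X 1)) A"
    using A' measurable_X[OF assms] measurable_X[of 1] by (simp add: emeasure_distr emeasure_eq_measure)
qed simp

lemma distr_restrict_X:
  assumes J: "finite J" "J \<subseteq> {1..}" "J \<noteq> {}"
  shows "distr M (PiM J (\<lambda>_. borel)) (\<lambda>\<omega>. \<lambda>i\<in>J. X i \<omega>) = PiM J (\<lambda>_. distr M borel (X 1))"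
proof -
  have ij: "indep_vars (\<lambda>_. borel) X J" by (rule indep_vars_subset[OF indep_X J(2)])
  have "distr M (PiM J (\<lambda>_. borel)) (\<lambda>\<omega>. \<lambda>i\<in>J. X i \<omega>) = PiM J (\<lambda>i. distr M borel (X i))"
  proof -
    have rv: "\<And>i. i \<in> J \<Longrightarrow> random_variable borel (X i)" using J measurable_X by auto
    show ?thesis using indep_vars_iff_distr_eq_PiM'[where I=J and M'="\<lambda>_. borel" and X=X, OF J(3) rv] ij by simp
  qed
  also have "\<dots> = PiM J (\<lambda>_. distr M borel (X 1))"
  proof (rule PiM_cong)
    fix i assume "i \<in> J" then have "i \<ge> 1" using J by auto
    then show "distr M borel (X i) = distr M borel (X 1)" by (rule distr_X_eq)
  qed simp
  finally show ?thesis .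
qed

lemma prob_sum_gt_eq_PiM:
  assumes J: "finite J" "J \<subseteq> {1..}" "J \<noteq> {}"
  shows "prob {\<omega>\<in>space M. y < (\<Sum>i\<in>J. X i \<omega>)} =
    measure (PiM J (\<lambda>_. distr M borel (X 1))) {f\<in>space (PiM J (\<lambda>_. borel)). y < (\<Sum>i\<in>J. f i)}"
proof -
  have mX: "(\<lambda>\<omega>. \<lambda>i\<in>J. X i \<omega>) \<in> measurable M (PiM J (\<lambda>_. borel))"
    using J measurable_X by (intro measurable_restrict) auto
  have S: "{f\<in>space (PiM J (\<lambda>_. borel)). y < (\<Sum>i\<in>J. f i)} \<in> sets (PiM J (\<lambda>_. borel))"
    by measurable
  have "(\<lambda>\<omega>. \<lambda>i\<in>J. X i \<omega>) -` {f\<in>space (PiM J (\<lambda>_. borel)). y < (\<Sum>i\<in>J. f i)} \<inter> space M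
      = {\<omega>\<in>space M. y < (\<Sum>i\<in>J. X i \<omega>)}"
    by (auto simp: space_PiM)
  then show ?thesis
    using measure_distr[OF mX S] distr_restrict_X[OF J] by simp
qed

lemma prob_sum_gt_eq_initial:
  assumes J: "finite J" "J \<subseteq> {1..}" "card J = k"
  shows "prob {\<omega>\<in>space M. y < (\<Sum>i\<in>J. X i \<omega>)} = prob {\<omega>\<in>space M. y < (\<Sum>i\<in>{1..k}. X i \<omega>)}"
proof (cases "k = 0")
  case True then show ?thesis using J by simp
next
  case False
  define \<mu> where "\<mu> = distr M borel (X 1)"
  have p\<mu>: "prob_space \<mu>" unfolding \<mu>_def using measurable_X[of 1] by (intro prob_space_distr) auto
  have Jne: "J \<noteq> {}" using False J by auto
  obtain h where h: "bij_betw h {1..k} J" using finite_same_card_bij[of "{1..k}" J] J by auto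
  have hJ: "inj_on h {1..k}" "h \<in> {1..k} \<rightarrow> J" using h by (auto simp: bij_betw_def)
  have re: "distr (PiM J (\<lambda>_. \<mu>)) (PiM {1..k} (\<lambda>_. \<mu>)) (\<lambda>\<omega>. \<lambda>n\<in>{1..k}. \<omega> (h n)) = PiM {1..k} (\<lambda>_. \<mu>)"
    using distr_PiM_reindex[of J "\<lambda>_. \<mu>" h "{1..k}"] p\<mu> hJ by simp
  have mre: "(\<lambda>\<omega>. \<lambda>n\<in>{1..k}. \<omega> (h n)) \<in> measurable (PiM J (\<lambda>_. \<mu>)) (PiM {1..k} (\<lambda>_. \<mu>))"
    using hJ by (intro measurable_restrict measurable_component_singleton) auto
  define S1 where "S1 = {f\<in>space (PiM {1..k} (\<lambda>_. borel)). y < (\<Sum>i\<in>{1..k}. f i)}"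
  define SJ where "SJ = {f\<in>space (PiM J (\<lambda>_. borel)). y < (\<Sum>i\<in>J. f i)}"
  have S1m: "S1 \<in> sets (PiM {1..k} (\<lambda>_. \<mu>))"
  proof -
    have "S1 \<in> sets (PiM {1..k} (\<lambda>_. borel))" unfolding S1_def by measurable
    moreover have "sets (PiM {1..k} (\<lambda>_. \<mu>)) = sets (PiM {1..k} (\<lambda>_. borel))"
      unfolding \<mu>_def by (intro sets_PiM_cong) auto
    ultimately show ?thesis by simp
  qed
  have "(\<lambda>\<omega>. \<lambda>n\<in>{1..k}. \<omega> (h n)) -` S1 \<inter> space (PiM J (\<lambda>_. \<mu>)) = SJ"
  proof -
    have "(\<Sum>n\<in>{1..k}. f (h n)) = (\<Sum>i\<in>J. f i)" for f :: "nat \<Rightarrow> real"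
      using sum.reindex_bij_betw[OF h, of f] by simp
    then show ?thesis unfolding S1_def SJ_def using hJ
      by (auto simp: space_PiM \<mu>_def Pi_iff)
  qed
  then have "measure (PiM {1..k} (\<lambda>_. \<mu>)) S1 = measure (PiM J (\<lambda>_. \<mu>)) SJ"
    using measure_distr[OF mre S1m] re by simp
  moreover have "{1..k} \<subseteq> {1::nat..}" "{1..k} \<noteq> {}" using False by auto
  ultimately show ?thesis
    using prob_sum_gt_eq_PiM[OF J(1,2) Jne, of y] prob_sum_gt_eq_PiM[of "{1..k}" y] unfolding S1_def SJ_def \<mu>_def
    by simp
qed

lemma prob_indep_blocks:
  assumes J: "J1 \<subseteq> {1..}" "J2 \<subseteq> {1..}" "J1 \<inter> J2 = {}"
    and A: "A \<in> sets (PiM J1 (\<lambda>_. borel))" and B: "B \<in> sets (PiM J2 (\<lambda>_. borel))"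
  shows "prob {\<omega>\<in>space M. (\<lambda>i\<in>J1. X i \<omega>) \<in> A \<and> (\<lambda>i\<in>J2. X i \<omega>) \<in> B}
       = prob {\<omega>\<in>space M. (\<lambda>i\<in>J1. X i \<omega>) \<in> A} * prob {\<omega>\<in>space M. (\<lambda>i\<in>J2. X i \<omega>) \<in> B}"
proof -
  define K where "K b = (if b then J1 else J2)" for b
  have iv: "indep_vars (\<lambda>b. PiM (K b) (\<lambda>_. borel)) (\<lambda>b \<omega>. restrict (\<lambda>i. X i \<omega>) (K b)) UNIV"
    by (rule indep_vars_restrict[OF indep_X]) (use J in \<open>auto simp: K_def disjoint_family_on_def\<close>)
  define AB where "AB b = (if b then A else B)" for b
  have "prob (\<Inter>b\<in>UNIV. (\<lambda>\<omega>. restrict (\<lambda>i. X i \<omega>) (K b)) -` AB b \<inter> space M)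
     = (\<Prod>b\<in>UNIV. prob ((\<lambda>\<omega>. restrict (\<lambda>i. X i \<omega>) (K b)) -` AB b \<inter> space M))"
    by (rule indep_varsD[OF iv]) (use A B in \<open>auto simp: AB_def K_def\<close>)
  moreover have "(\<Inter>b\<in>UNIV. (\<lambda>\<omega>. restrict (\<lambda>i. X i \<omega>) (K b)) -` AB b \<inter> space M)
      = {\<omega>\<in>space M. (\<lambda>i\<in>J1. X i \<omega>) \<in> A \<and> (\<lambda>i\<in>J2. X i \<omega>) \<in> B}"
    by (auto simp: AB_def K_def all_bool_eq)
  moreover have "(\<lambda>\<omega>. restrict (\<lambda>i. X i \<omega>) (K True)) -` AB True \<inter> space M = {\<omega>\<in>space M. (\<lambda>i\<in>J1. X i \<omega>) \<in> A}"
    "(\<lambda>\<omega>. restrict (\<lambda>i. X i \<omega>) (K False)) -` AB False \<inter> space M = {\<omega>\<in>space M. (\<lambda>i\<in>J2. X i \<omega>) \<in> B}"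
    by (auto simp: AB_def K_def)
  ultimately show ?thesis by (simp add: UNIV_bool)
qed

lemma prob_X_lt_pow2:
  assumes i: "i \<ge> 1" and j: "j \<ge> 1"
  shows "prob {\<omega>\<in>space M. X i \<omega> < 2 ^ j} = 1 - 2 / 2 ^ j"
proof -
  have [measurable]: "X i \<in> borel_measurable M" using measurable_X i by simp
  have ev: "{\<omega>\<in>space M. X i \<omega> \<ge> 2 ^ j} \<in> events" by measurable
  have "{\<omega>\<in>space M. X i \<omega> < 2 ^ j} = space M - {\<omega>\<in>space M. X i \<omega> \<ge> 2 ^ j}" by auto
  then show ?thesis using prob_compl[OF ev] prob_X_ge_pow2[OF i j] by simp
qed

lemma prob_all_ge_pow2:
  assumes J: "finite J" "J \<subseteq> {1..}" and j: "j \<ge> 1"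
  shows "prob {\<omega>\<in>space M. \<forall>i\<in>J. X i \<omega> \<ge> 2 ^ j} = (2 / 2 ^ j) ^ card J"
proof -
  have "prob {\<omega>\<in>space M. \<forall>i\<in>J. X i \<omega> \<in> {2 ^ j..}} = (\<Prod>i\<in>J. prob {\<omega>\<in>space M. X i \<omega> \<in> {2 ^ j..}})"
    by (rule prob_all_X_in[OF J]) simp
  also have "\<dots> = (\<Prod>i\<in>J. 2 / 2 ^ j)" using J prob_X_ge_pow2[OF _ j] by (intro prod.cong) auto
  finally show ?thesis by simp
qed

lemma prob_level_pattern:
  assumes I: "finite I" "I \<subseteq> {1..}" and T: "T \<subseteq> I" and j: "j \<ge> 1"
  shows "prob {\<omega>\<in>space M. (\<forall>i\<in>T. X i \<omega> \<ge> 2 ^ j) \<and> (\<forall>i\<in>I-T. X i \<omega> < 2 ^ j)}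
       = (2 / 2 ^ j) ^ card T * (1 - 2 / 2 ^ j) ^ card (I-T)"
proof -
  define A where "A i = (if i \<in> T then {2 ^ j..} else {..<(2::real) ^ j})" for i
  have "{\<omega>\<in>space M. (\<forall>i\<in>T. X i \<omega> \<ge> 2 ^ j) \<and> (\<forall>i\<in>I-T. X i \<omega> < 2 ^ j)} = {\<omega>\<in>space M. \<forall>i\<in>I. X i \<omega> \<in> A i}"
    using T unfolding A_def by auto
  moreover have "prob {\<omega>\<in>space M. \<forall>i\<in>I. X i \<omega> \<in> A i} = (\<Prod>i\<in>I. prob {\<omega>\<in>space M. X i \<omega> \<in> A i})"
    by (rule prob_all_X_in[OF I]) (simp add: A_def)
  moreover have "(\<Prod>i\<in>I. prob {\<omega>\<in>space M. X i \<omega> \<in> A i}) = (\<Prod>i\<in>I. if i \<in> T then 2 / 2 ^ j else 1 - 2 / 2 ^ j)"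
    using I prob_X_ge_pow2[OF _ j] prob_X_lt_pow2[OF _ j] by (intro prod.cong) (auto simp: A_def)
  moreover have "(\<Prod>i\<in>I. if i \<in> T then 2 / 2 ^ j else 1 - 2 / 2 ^ j) = (2 / 2 ^ j) ^ card T * (1 - 2 / (2::real) ^ j) ^ card (I-T)"
  proof -
    have "I \<inter> {x. x \<in> T} = T" "I \<inter> - {x. x \<in> T} = I - T" using T by auto
    then show ?thesis by (simp add: prod.If_cases[OF I(1)])
  qed
  ultimately show ?thesis by simp
qed

lemma prob_all_ge_not_all_ge_pow2:
  assumes J: "finite J" "J \<subseteq> {1..}" and m: "m \<ge> 1"
  shows "prob {\<omega>\<in>space M. (\<forall>i\<in>J. X i \<omega> \<ge> 2 ^ m) \<and> \<not> (\<forall>i\<in>J. X i \<omega> \<ge> 2 ^ (m + 1))}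
    = (2 / 2 ^ m) ^ card J - (2 / 2 ^ (m + 1)) ^ card J"
proof -
  have [measurable]: "\<And>i. i \<in> J \<Longrightarrow> X i \<in> borel_measurable M" using measurable_X J by auto
  define A where "A k = {\<omega>\<in>space M. \<forall>i\<in>J. X i \<omega> \<ge> 2 ^ k}" for k :: nat
  have ev: "A k \<in> events" for k unfolding A_def using J(1) by measurable
  have "(2::real) ^ m \<le> v" if "2 ^ (m + 1) \<le> v" for v
    using order_trans[OF power_increasing[of m "m + 1" "2::real"] that] by simp
  then have "A (m + 1) \<subseteq> A m" unfolding A_def by blast
  then have "prob (A m - A (m + 1)) = prob (A m) - prob (A (m + 1))"
    using finite_measure_Diff ev by blast
  moreover have "A m - A (m + 1) = {\<omega>\<in>space M. (\<forall>i\<in>J. X i \<omega> \<ge> 2 ^ m) \<and> \<not> (\<forall>i\<in>J. X i \<omega> \<ge> 2 ^ (m + 1))}"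
    unfolding A_def by blast
  ultimately show ?thesis
    using prob_all_ge_pow2[OF J m] prob_all_ge_pow2[OF J, of "m + 1"] unfolding A_def by simp
qed

lemma prob_boundary_pattern:
  assumes I: "finite I" "I \<subseteq> {1..}" and T: "T \<subseteq> I" and m: "m \<ge> 1"
  shows "prob {\<omega>\<in>space M. (\<forall>i\<in>T. X i \<omega> \<ge> 2 ^ m) \<and> \<not> (\<forall>i\<in>T. X i \<omega> \<ge> 2 ^ (m + 1)) \<and>
            (\<forall>i\<in>I-T. X i \<omega> < 2 ^ m) \<and> y < (\<Sum>i\<in>I-T. X i \<omega>)}
   = ((2 / 2 ^ m) ^ card T - (2 / 2 ^ (m + 1)) ^ card T) *
      prob {\<omega>\<in>space M. (\<forall>i\<in>I-T. X i \<omega> < 2 ^ m) \<and> y < (\<Sum>i\<in>I-T. X i \<omega>)}"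
proof -
  define A where "A = {f\<in>space (PiM T (\<lambda>_. borel)). (\<forall>i\<in>T. f i \<ge> (2::real) ^ m) \<and> \<not> (\<forall>i\<in>T. f i \<ge> 2 ^ (m + 1))}"
  define B where "B = {f\<in>space (PiM (I-T) (\<lambda>_. borel)). (\<forall>i\<in>I-T. f i < (2::real) ^ m) \<and> y < (\<Sum>i\<in>I-T. f i)}"
  have fT: "finite T" "finite (I-T)" using I T finite_subset by auto
  have Am: "A \<in> sets (PiM T (\<lambda>_. borel))" unfolding A_def using fT by measurable
  have Bm: "B \<in> sets (PiM (I-T) (\<lambda>_. borel))" unfolding B_def using fT by measurable
  have TJ: "T \<subseteq> {1..}" "I - T \<subseteq> {1..}" "T \<inter> (I - T) = {}" using I T by auto
  have "{\<omega>\<in>space M. (\<lambda>i\<in>T. X i \<omega>) \<in> A \<and> (\<lambda>i\<in>I-T. X i \<omega>) \<in> B} =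
     {\<omega>\<in>space M. (\<forall>i\<in>T. X i \<omega> \<ge> 2 ^ m) \<and> \<not> (\<forall>i\<in>T. X i \<omega> \<ge> 2 ^ (m + 1)) \<and>
            (\<forall>i\<in>I-T. X i \<omega> < 2 ^ m) \<and> y < (\<Sum>i\<in>I-T. X i \<omega>)}"
    by (auto simp: A_def B_def space_PiM)
  moreover have "{\<omega>\<in>space M. (\<lambda>i\<in>T. X i \<omega>) \<in> A} =
      {\<omega>\<in>space M. (\<forall>i\<in>T. X i \<omega> \<ge> 2 ^ m) \<and> \<not> (\<forall>i\<in>T. X i \<omega> \<ge> 2 ^ (m + 1))}"
    by (auto simp: A_def space_PiM)
  moreover have "{\<omega>\<in>space M. (\<lambda>i\<in>I-T. X i \<omega>) \<in> B} =
     {\<omega>\<in>space M. (\<forall>i\<in>I-T. X i \<omega> < 2 ^ m) \<and> y < (\<Sum>i\<in>I-T. X i \<omega>)}"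
    by (auto simp: B_def space_PiM)
  ultimately show ?thesis
    using prob_indep_blocks[OF TJ Am Bm] prob_all_ge_not_all_ge_pow2[OF fT(1) TJ(1) m] by simp
qed

lemma prob_all_lt_and_sum_gt_bounds:
  assumes J: "finite J" "J \<subseteq> {1..}" and m: "m \<ge> 1"
  shows "prob {\<omega>\<in>space M. (\<forall>i\<in>J. X i \<omega> < 2 ^ m) \<and> y < (\<Sum>i\<in>J. X i \<omega>)} \<le> prob {\<omega>\<in>space M. y < (\<Sum>i\<in>J. X i \<omega>)}"
    and "prob {\<omega>\<in>space M. y < (\<Sum>i\<in>J. X i \<omega>)} - card J * (2 / 2 ^ m) \<le> prob {\<omega>\<in>space M. (\<forall>i\<in>J. X i \<omega> < 2 ^ m) \<and> y < (\<Sum>i\<in>J. X i \<omega>)}"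
proof -
  have [measurable]: "\<And>i. i \<in> J \<Longrightarrow> X i \<in> borel_measurable M" using measurable_X J by auto
  show "prob {\<omega>\<in>space M. (\<forall>i\<in>J. X i \<omega> < 2 ^ m) \<and> y < (\<Sum>i\<in>J. X i \<omega>)} \<le> prob {\<omega>\<in>space M. y < (\<Sum>i\<in>J. X i \<omega>)}"
    by (rule finite_measure_mono) (use J in auto)
  have sub: "{\<omega>\<in>space M. y < (\<Sum>i\<in>J. X i \<omega>)} \<subseteq> {\<omega>\<in>space M. (\<forall>i\<in>J. X i \<omega> < 2 ^ m) \<and> y < (\<Sum>i\<in>J. X i \<omega>)}
      \<union> (\<Union>i\<in>J. {\<omega>\<in>space M. X i \<omega> \<ge> 2 ^ m})" by auto
  have "prob {\<omega>\<in>space M. y < (\<Sum>i\<in>J. X i \<omega>)} \<le> prob ({\<omega>\<in>space M. (\<forall>i\<in>J. X i \<omega> < 2 ^ m) \<and> y < (\<Sum>i\<in>J. X i \<omega>)}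
      \<union> (\<Union>i\<in>J. {\<omega>\<in>space M. X i \<omega> \<ge> 2 ^ m}))"
    by (rule finite_measure_mono[OF sub]) (use J in measurable)
  also have "\<dots> \<le> prob {\<omega>\<in>space M. (\<forall>i\<in>J. X i \<omega> < 2 ^ m) \<and> y < (\<Sum>i\<in>J. X i \<omega>)}
      + prob (\<Union>i\<in>J. {\<omega>\<in>space M. X i \<omega> \<ge> 2 ^ m})"
    by (rule measure_Un_le) (use J in measurable)
  also have "prob (\<Union>i\<in>J. {\<omega>\<in>space M. X i \<omega> \<ge> 2 ^ m}) \<le> (\<Sum>i\<in>J. prob {\<omega>\<in>space M. X i \<omega> \<ge> 2 ^ m})"
    by (rule finite_measure_subadditive_finite) (use J in auto)
  also have "\<dots> = (\<Sum>i\<in>J. 2 / 2 ^ m)" using J prob_X_ge_pow2[OF _ m] by (intro sum.cong) auto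
  also have "\<dots> = card J * (2 / 2 ^ m)" by simp
  finally show "prob {\<omega>\<in>space M. y < (\<Sum>i\<in>J. X i \<omega>)} - card J * (2 / 2 ^ m) \<le> prob {\<omega>\<in>space M. (\<forall>i\<in>J. X i \<omega> < 2 ^ m) \<and> y < (\<Sum>i\<in>J. X i \<omega>)}"
    by simp
qed

lemma prob_X_ge_le:
  assumes i: "i \<ge> 1" and t: "t > 0"
  shows "prob {\<omega>\<in>space M. X i \<omega> \<ge> t} \<le> 2 / t"
proof (cases "t \<le> 2")
  case True
  have "prob {\<omega>\<in>space M. X i \<omega> \<ge> t} \<le> 1" by (rule prob_le_1)
  also have "1 \<le> 2 / t" using True t by (simp add: field_simps)
  finally show ?thesis .
next
  case False
  have [measurable]: "X i \<in> borel_measurable M" using measurable_X i by simp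
  obtain j where j: "1 \<le> j" "t \<le> 2 ^ j" and least: "\<And>k::nat. t \<le> 2 ^ k \<Longrightarrow> j \<le> k"
    using obtain_least_power_two_ge[of t] False by auto
  have "prob {\<omega>\<in>space M. X i \<omega> \<ge> t} \<le> prob {\<omega>\<in>space M. X i \<omega> \<ge> 2 ^ j}"
  proof (rule finite_measure_mono_AE)
    show "AE \<omega> in M. \<omega> \<in> {\<omega>\<in>space M. X i \<omega> \<ge> t} \<longrightarrow> \<omega> \<in> {\<omega>\<in>space M. X i \<omega> \<ge> 2 ^ j}"
      using AE_X_pow2[OF i]
    proof eventually_elim
      case (elim \<omega>)
      then obtain k where k: "X i \<omega> = 2 ^ k" by auto
      have "(2::real) ^ j \<le> 2 ^ k" if "t \<le> 2 ^ k" using least[OF that] by (rule power_increasing) simp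
      then show ?case using k by auto
    qed
  qed measurable
  also have "\<dots> = 2 / 2 ^ j" using prob_X_ge_pow2[OF i j(1)] .
  also have "\<dots> \<le> 2 / t" using j t by (simp add: frac_le)
  finally show ?thesis .
qed

lemma prob_sum_gt_le:
  assumes J: "finite J" "J \<subseteq> {1..}" and y: "y > 0"
  shows "prob {\<omega>\<in>space M. y < (\<Sum>i\<in>J. X i \<omega>)} \<le> 2 * card J ^ 2 / y"
proof (cases "J = {}")
  case True then show ?thesis using y by simp
next
  case False
  have [measurable]: "\<And>i. i \<in> J \<Longrightarrow> X i \<in> borel_measurable M" using measurable_X J by auto
  define c where "c = real (card J)"
  have c: "c > 0" using False J unfolding c_def by auto
  have sub: "{\<omega>\<in>space M. y < (\<Sum>i\<in>J. X i \<omega>)} \<subseteq> (\<Union>i\<in>J. {\<omega>\<in>space M. X i \<omega> \<ge> y / c})"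
  proof safe
    fix \<omega> assume \<omega>: "\<omega> \<in> space M" "y < (\<Sum>i\<in>J. X i \<omega>)"
    show "\<omega> \<in> (\<Union>i\<in>J. {\<omega>\<in>space M. X i \<omega> \<ge> y / c})"
    proof (rule ccontr)
      assume "\<omega> \<notin> (\<Union>i\<in>J. {\<omega>\<in>space M. X i \<omega> \<ge> y / c})"
      then have "\<forall>i\<in>J. X i \<omega> < y / c" using \<omega> by auto
      then have "(\<Sum>i\<in>J. X i \<omega>) < (\<Sum>i\<in>J. y / c)" using J False by (intro sum_strict_mono) auto
      also have "\<dots> = y" using c unfolding c_def by simp
      finally show False using \<omega> by simp
    qed
  qed
  have "prob {\<omega>\<in>space M. y < (\<Sum>i\<in>J. X i \<omega>)} \<le> prob (\<Union>i\<in>J. {\<omega>\<in>space M. X i \<omega> \<ge> y / c})"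
    by (rule finite_measure_mono[OF sub]) (use J in measurable)
  also have "\<dots> \<le> (\<Sum>i\<in>J. prob {\<omega>\<in>space M. X i \<omega> \<ge> y / c})"
    by (rule finite_measure_subadditive_finite) (use J in auto)
  also have "\<dots> \<le> (\<Sum>i\<in>J. 2 / (y / c))" using J y c by (intro sum_mono prob_X_ge_le) auto
  also have "\<dots> = 2 * card J ^ 2 / y" using c unfolding c_def by (simp add: power2_eq_square field_simps)
  finally show ?thesis .
qed

end

section \<open>Bounds on the tail of the trimmed sum\<close>

locale st_petersburg_trimmed = st_petersburg +
  fixes n r :: nat
  assumes r_less_n: "r < n"
begin

definition subsets_card :: "nat \<Rightarrow> nat set set" where
  "subsets_card k = {T. T \<subseteq> {1..n} \<and> card T = k}"

definition level_event :: "nat \<Rightarrow> nat set \<Rightarrow> 'a set" where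
  "level_event j T = {\<omega>\<in>space M. (\<forall>i\<in>T. 2 ^ j \<le> X i \<omega>) \<and> (\<forall>i\<in>{1..n}-T. X i \<omega> < 2 ^ j)}"

definition boundary_event :: "nat \<Rightarrow> real \<Rightarrow> nat set \<Rightarrow> 'a set" where
  "boundary_event m x T = {\<omega>\<in>space M. (\<forall>i\<in>T. 2 ^ m \<le> X i \<omega>) \<and> \<not> (\<forall>i\<in>T. 2 ^ (m + 1) \<le> X i \<omega>) \<and>
     (\<forall>i\<in>{1..n}-T. X i \<omega> < 2 ^ m) \<and> x - 2 ^ m < (\<Sum>i\<in>{1..n}-T. X i \<omega>)}"

definition all_ge_event :: "nat \<Rightarrow> nat set \<Rightarrow> 'a set" where
  "all_ge_event j T = {\<omega>\<in>space M. \<forall>i\<in>T. 2 ^ j \<le> X i \<omega>}"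

definition rest_tail :: "nat \<Rightarrow> real \<Rightarrow> real" where
  "rest_tail m x = prob {\<omega>\<in>space M. x - 2 ^ m < partial_sum X (n - (r + 1)) \<omega>}"

lemma finite_subsets_card: "finite (subsets_card k)"
  by (rule finite_subset[of _ "Pow {1..n}"]) (auto simp: subsets_card_def)

lemma card_subsets_card: "card (subsets_card k) = n choose k"
  unfolding subsets_card_def using n_subsets[of "{1..n}" k] by simp

lemma pattern_events:
  assumes T: "T \<subseteq> {1..n}"
  shows "level_event j T \<in> events" "boundary_event m x T \<in> events" "all_ge_event j T \<in> events"
proof -
  have [measurable]: "\<And>i. i \<in> T \<Longrightarrow> X i \<in> borel_measurable M"
    "\<And>i. i \<in> {1..n}-T \<Longrightarrow> X i \<in> borel_measurable M"
    using T measurable_X by auto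
  have fin: "finite T" "finite ({1..n}-T)" using T finite_subset by auto
  show "level_event j T \<in> events" unfolding level_event_def using fin by measurable
  show "boundary_event m x T \<in> events" unfolding boundary_event_def using fin by measurable
  show "all_ge_event j T \<in> events" unfolding all_ge_event_def using fin by measurable
qed

lemma trimmed_sum_gt_event: "{\<omega>\<in>space M. x < trimmed_sum X n r \<omega>} \<in> events"
proof -
  have "{\<omega>\<in>space M. x < trimmed_sum X n r \<omega>} =
      {\<omega>\<in>space M. \<forall>T\<in>subsets_card r. x < (\<Sum>i\<in>{1..n}-T. X i \<omega>)}"
  proof -
    have "x < trimmed_sum X n r \<omega> \<longleftrightarrow> (\<forall>T\<in>subsets_card r. x < (\<Sum>i\<in>{1..n}-T. X i \<omega>))" for \<omega>
      unfolding trimmed_sum_gt_iff[OF less_imp_le[OF r_less_n]] subsets_card_def by blast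
    then show ?thesis by auto
  qed
  also have "\<dots> \<in> events"
  proof -
    have [measurable]: "\<And>i T. i \<in> {1..n}-T \<Longrightarrow> X i \<in> borel_measurable M" using measurable_X by auto
    show ?thesis using finite_subsets_card by measurable
  qed
  finally show ?thesis .
qed

lemma AE_dyadic: "AE \<omega> in M. \<forall>i\<in>{1..n}. \<exists>k::nat. X i \<omega> = 2 ^ k"
proof (rule AE_finite_allI)
  fix i assume "i \<in> {1..n}"
  then have "1 \<le> i" by simp
  from AE_X_pow2[OF this] show "AE \<omega> in M. \<exists>k::nat. X i \<omega> = 2 ^ k" by eventually_elim blast
qed simp

lemma level_event_eq_level_set:
  assumes "\<omega> \<in> level_event j T" "T \<subseteq> {1..n}"
  shows "T = {i\<in>{1..n}. 2 ^ j \<le> X i \<omega>}"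
  using assms eq_level_set_if_pattern[of T "{1..n}" "2 ^ j" "\<lambda>i. X i \<omega>"] by (auto simp: level_event_def)

lemma boundary_event_eq_level_set:
  assumes "\<omega> \<in> boundary_event m x T" "T \<subseteq> {1..n}"
  shows "T = {i\<in>{1..n}. 2 ^ m \<le> X i \<omega>}"
  using assms eq_level_set_if_pattern[of T "{1..n}" "2 ^ m" "\<lambda>i. X i \<omega>"] by (auto simp: boundary_event_def)

lemma disjoint_family_level_event: "disjoint_family_on (level_event j) (subsets_card k)"
  unfolding disjoint_family_on_def
proof (intro ballI impI)
  fix T T' assume T: "T \<in> subsets_card k" "T' \<in> subsets_card k" "T \<noteq> T'"
  have "T = T'" if "\<omega> \<in> level_event j T" "\<omega> \<in> level_event j T'" for \<omega>
    using level_event_eq_level_set[OF that(1)] level_event_eq_level_set[OF that(2)] T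
    by (auto simp: subsets_card_def)
  then show "level_event j T \<inter> level_event j T' = {}" using T(3) by blast
qed

lemma disjoint_family_boundary_event: "disjoint_family_on (boundary_event m x) (subsets_card k)"
  unfolding disjoint_family_on_def
proof (intro ballI impI)
  fix T T' assume T: "T \<in> subsets_card k" "T' \<in> subsets_card k" "T \<noteq> T'"
  have "T = T'" if "\<omega> \<in> boundary_event m x T" "\<omega> \<in> boundary_event m x T'" for \<omega>
    using boundary_event_eq_level_set[OF that(1)] boundary_event_eq_level_set[OF that(2)] T
    by (auto simp: subsets_card_def)
  then show "boundary_event m x T \<inter> boundary_event m x T' = {}" using T(3) by blast
qed

lemma level_event_Int_boundary_event:
  assumes T: "T \<in> subsets_card k" "T' \<in> subsets_card k"
  shows "level_event (m + 1) T \<inter> boundary_event m x T' = {}"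
proof (rule ccontr)
  assume "level_event (m + 1) T \<inter> boundary_event m x T' \<noteq> {}"
  then obtain \<omega> where \<omega>: "\<omega> \<in> level_event (m + 1) T" "\<omega> \<in> boundary_event m x T'" by auto
  have "(2::real) ^ m \<le> v" if "2 ^ (m + 1) \<le> v" for v
    using order_trans[OF power_increasing[of m "m + 1" "2::real"] that] by simp
  then have "T \<subseteq> T'"
    using level_event_eq_level_set[OF \<omega>(1)] boundary_event_eq_level_set[OF \<omega>(2)] T
    by (auto simp: subsets_card_def)
  then have "T = T'" using T by (intro card_subset_eq) (auto simp: subsets_card_def intro: finite_subset)
  then show False using \<omega> unfolding level_event_def boundary_event_def by auto
qed

lemma trimmed_sum_gt_if_level_event:
  assumes "\<omega> \<in> level_event (m + 1) T" "T \<in> subsets_card (r + 1)" "x < 2 ^ (m + 1)"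
    and dyadic: "\<forall>i\<in>{1..n}. \<exists>k::nat. X i \<omega> = 2 ^ k"
  shows "x < trimmed_sum X n r \<omega>"
proof -
  have "\<forall>i\<in>{1..n}. 0 \<le> X i \<omega>" using dyadic by fastforce
  with assms show ?thesis
    using trimmed_sum_gt_if_many_large[where X=X and \<omega>=\<omega> and t="2 ^ (m + 1)", OF r_less_n]
    by (auto simp: level_event_def subsets_card_def)
qed

lemma trimmed_sum_gt_if_boundary_event:
  assumes "\<omega> \<in> boundary_event m x T" "T \<in> subsets_card (r + 1)"
  shows "x < trimmed_sum X n r \<omega>"
  using assms trimmed_sum_gt_if_boundary[OF r_less_n, of T "2 ^ m" X \<omega> x]
  by (auto simp: boundary_event_def subsets_card_def)

lemma trimmed_sum_gt_imp_events:
  assumes dyadic: "\<forall>i\<in>{1..n}. \<exists>k::nat. X i \<omega> = 2 ^ k" and "\<omega> \<in> space M"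
    and m: "n + 1 \<le> m" and x: "2 ^ m \<le> x" and gt: "x < trimmed_sum X n r \<omega>"
  shows "\<omega> \<in> (\<Union>U\<in>subsets_card (r + 2). all_ge_event (m - n) U) \<union>
    (\<Union>T\<in>subsets_card (r + 1). all_ge_event (m + 1) T) \<union> (\<Union>T\<in>subsets_card (r + 1). boundary_event m x T)"
  using trimmed_sum_gt_cases[OF r_less_n dyadic m x gt]
proof (elim disjE exE conjE)
  fix U assume "U \<subseteq> {1..n}" "card U = r + 2" "\<forall>i\<in>U. 2 ^ (m - n) \<le> X i \<omega>"
  then show ?thesis using \<open>\<omega> \<in> space M\<close> unfolding subsets_card_def all_ge_event_def by blast
next
  fix T assume "T \<subseteq> {1..n}" "card T = r + 1" "\<forall>i\<in>T. 2 ^ (m + 1) \<le> X i \<omega>"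
  then show ?thesis using \<open>\<omega> \<in> space M\<close> unfolding subsets_card_def all_ge_event_def by blast
next
  fix T assume "T \<subseteq> {1..n}" "card T = r + 1" "\<forall>i\<in>T. 2 ^ m \<le> X i \<omega>"
    "\<not> (\<forall>i\<in>T. 2 ^ (m + 1) \<le> X i \<omega>)" "\<forall>i\<in>{1..n}-T. X i \<omega> < 2 ^ m"
    "x - 2 ^ m < (\<Sum>i\<in>{1..n}-T. X i \<omega>)"
  then have "\<omega> \<in> boundary_event m x T" "T \<in> subsets_card (r + 1)"
    using \<open>\<omega> \<in> space M\<close> unfolding subsets_card_def boundary_event_def by auto
  then show ?thesis by blast
qed

lemma prob_trimmed_sum_gt_ge_sum:
  assumes m: "1 \<le> m" and x: "x < 2 ^ (m + 1)"
  shows "(\<Sum>T\<in>subsets_card (r + 1). prob (level_event (m + 1) T)) +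
      (\<Sum>T\<in>subsets_card (r + 1). prob (boundary_event m x T))
     \<le> prob {\<omega>\<in>space M. x < trimmed_sum X n r \<omega>}"
proof -
  let ?F = "subsets_card (r + 1)"
  define U1 where "U1 = (\<Union>T\<in>?F. level_event (m + 1) T)"
  define U2 where "U2 = (\<Union>T\<in>?F. boundary_event m x T)"
  have ev: "level_event (m + 1) T \<in> events" "boundary_event m x T \<in> events" if "T \<in> ?F" for T
    using pattern_events that by (auto simp: subsets_card_def)
  have "U1 \<inter> U2 = {}" unfolding U1_def U2_def using level_event_Int_boundary_event by blast
  then have "prob (U1 \<union> U2) = prob U1 + prob U2"
    using ev finite_subsets_card by (intro finite_measure_Union) (auto simp: U1_def U2_def)
  also have "prob U1 = (\<Sum>T\<in>?F. prob (level_event (m + 1) T))" unfolding U1_def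
    by (rule finite_measure_finite_Union[OF finite_subsets_card _ disjoint_family_level_event]) (use ev in auto)
  also have "prob U2 = (\<Sum>T\<in>?F. prob (boundary_event m x T))" unfolding U2_def
    by (rule finite_measure_finite_Union[OF finite_subsets_card _ disjoint_family_boundary_event]) (use ev in auto)
  finally have "prob (U1 \<union> U2) = (\<Sum>T\<in>?F. prob (level_event (m + 1) T)) + (\<Sum>T\<in>?F. prob (boundary_event m x T))" .
  moreover have "prob (U1 \<union> U2) \<le> prob {\<omega>\<in>space M. x < trimmed_sum X n r \<omega>}"
  proof (rule finite_measure_mono_AE[OF _ trimmed_sum_gt_event])
    show "AE \<omega> in M. \<omega> \<in> U1 \<union> U2 \<longrightarrow> \<omega> \<in> {\<omega>\<in>space M. x < trimmed_sum X n r \<omega>}"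
      using AE_dyadic
    proof eventually_elim
      case (elim \<omega>)
      have "level_event (m + 1) T \<subseteq> space M" "boundary_event m x T \<subseteq> space M" for T
        unfolding level_event_def boundary_event_def by auto
      then show ?case
        unfolding U1_def U2_def
        using trimmed_sum_gt_if_level_event[OF _ _ x elim] trimmed_sum_gt_if_boundary_event by blast
    qed
  qed
  ultimately show ?thesis by simp
qed

lemma prob_trimmed_sum_gt_le_sum:
  assumes m: "n + 1 \<le> m" and x: "2 ^ m \<le> x"
  shows "prob {\<omega>\<in>space M. x < trimmed_sum X n r \<omega>}
     \<le> (\<Sum>U\<in>subsets_card (r + 2). prob (all_ge_event (m - n) U)) +
        (\<Sum>T\<in>subsets_card (r + 1). prob (all_ge_event (m + 1) T)) +
        (\<Sum>T\<in>subsets_card (r + 1). prob (boundary_event m x T))"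
proof -
  define U1 where "U1 = (\<Union>U\<in>subsets_card (r + 2). all_ge_event (m - n) U)"
  define U2 where "U2 = (\<Union>T\<in>subsets_card (r + 1). all_ge_event (m + 1) T)"
  define U3 where "U3 = (\<Union>T\<in>subsets_card (r + 1). boundary_event m x T)"
  have F: "T \<in> subsets_card k \<Longrightarrow> T \<subseteq> {1..n}" for T k by (auto simp: subsets_card_def)
  have evU: "U1 \<in> events" "U2 \<in> events" "U3 \<in> events"
    unfolding U1_def U2_def U3_def using pattern_events F finite_subsets_card by auto
  have "prob {\<omega>\<in>space M. x < trimmed_sum X n r \<omega>} \<le> prob (U1 \<union> U2 \<union> U3)"
  proof (rule finite_measure_mono_AE)
    show "AE \<omega> in M. \<omega> \<in> {\<omega>\<in>space M. x < trimmed_sum X n r \<omega>} \<longrightarrow> \<omega> \<in> U1 \<union> U2 \<union> U3"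
      using AE_dyadic
    proof eventually_elim
      case (elim \<omega>)
      show ?case
        unfolding U1_def U2_def U3_def using trimmed_sum_gt_imp_events[OF elim _ m x] by blast
    qed
  qed (use evU in auto)
  also have "\<dots> \<le> prob (U1 \<union> U2) + prob U3" by (rule measure_Un_le) (use evU in auto)
  also have "prob (U1 \<union> U2) \<le> prob U1 + prob U2" by (rule measure_Un_le) (use evU in auto)
  also have "prob U1 \<le> (\<Sum>U\<in>subsets_card (r + 2). prob (all_ge_event (m - n) U))"
    unfolding U1_def by (rule finite_measure_subadditive_finite[OF finite_subsets_card]) (use pattern_events F in auto)
  also have "prob U2 \<le> (\<Sum>T\<in>subsets_card (r + 1). prob (all_ge_event (m + 1) T))"
    unfolding U2_def by (rule finite_measure_subadditive_finite[OF finite_subsets_card]) (use pattern_events F in auto)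
  also have "prob U3 \<le> (\<Sum>T\<in>subsets_card (r + 1). prob (boundary_event m x T))"
    unfolding U3_def by (rule finite_measure_subadditive_finite[OF finite_subsets_card]) (use pattern_events F in auto)
  finally show ?thesis by simp
qed

lemma prob_level_event:
  assumes T: "T \<in> subsets_card (r + 1)" and m: "1 \<le> m"
  shows "prob (level_event (m + 1) T) = (1 / 2 ^ m) ^ (r + 1) * (1 - 1 / 2 ^ m) ^ (n - (r + 1))"
proof -
  have T': "T \<subseteq> {1..n}" "card T = r + 1" using T by (auto simp: subsets_card_def)
  have "card ({1..n} - T) = n - (r + 1)" using T' by (simp add: card_Diff_subset finite_subset)
  moreover have "(2::real) / 2 ^ (m + 1) = 1 / 2 ^ m" by simp
  ultimately show ?thesis
    using prob_level_pattern[of "{1..n}" T "m + 1"] T' unfolding level_event_def by simp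
qed

lemma prob_all_ge_event:
  assumes "U \<subseteq> {1..n}" and "1 \<le> j"
  shows "prob (all_ge_event j U) = (2 / 2 ^ j) ^ card U"
  unfolding all_ge_event_def by (rule prob_all_ge_pow2) (use assms finite_subset in auto)

text \<open>The boundary event factors by independence into the event on T, of probability
  (2^(r+1) - 1) / 2^(m(r+1)), and an event on the remaining n - r - 1 variables that differs
  from the tail of their sum only when one of them reaches 2^m.\<close>
lemma prob_boundary_event_bounds:
  assumes T: "T \<in> subsets_card (r + 1)" and m: "1 \<le> m"
  defines "c \<equiv> ((2::real) ^ (r + 1) - 1) * (1 / 2 ^ m) ^ (r + 1)"
  shows "prob (boundary_event m x T) \<le> c * rest_tail m x"
    and "c * (rest_tail m x - (n - (r + 1)) * (2 / 2 ^ m)) \<le> prob (boundary_event m x T)"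
proof -
  have T': "T \<subseteq> {1..n}" "card T = r + 1" using T by (auto simp: subsets_card_def)
  have J: "finite ({1..n}-T)" "{1..n}-T \<subseteq> {1..}" by auto
  have card: "card ({1..n} - T) = n - (r + 1)" using T' by (simp add: card_Diff_subset finite_subset)
  have "(2 / 2 ^ m) ^ (r + 1) - (2 / 2 ^ (m + 1)) ^ (r + 1) = c"
    unfolding c_def by (simp add: power_divide algebra_simps add_divide_distrib[symmetric])
  then have factor: "prob (boundary_event m x T) = c *
      prob {\<omega>\<in>space M. (\<forall>i\<in>{1..n}-T. X i \<omega> < 2 ^ m) \<and> x - 2 ^ m < (\<Sum>i\<in>{1..n}-T. X i \<omega>)}"
    using prob_boundary_pattern[of "{1..n}" T m "x - 2 ^ m"] T' m unfolding boundary_event_def by simp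
  have c: "0 \<le> c" unfolding c_def using one_le_power[of "2::real" "r + 1"] by simp
  have rest: "prob {\<omega>\<in>space M. x - 2 ^ m < (\<Sum>i\<in>{1..n}-T. X i \<omega>)} = rest_tail m x"
    unfolding rest_tail_def partial_sum_def using prob_sum_gt_eq_initial[OF J card] .
  show "prob (boundary_event m x T) \<le> c * rest_tail m x"
    using prob_all_lt_and_sum_gt_bounds(1)[OF J m, of "x - 2 ^ m"] factor rest c
    by (simp add: mult_left_mono)
  show "c * (rest_tail m x - (n - (r + 1)) * (2 / 2 ^ m)) \<le> prob (boundary_event m x T)"
    using prob_all_lt_and_sum_gt_bounds(2)[OF J m, of "x - 2 ^ m"] factor rest c card
    by (simp add: mult_left_mono)
qed

text \<open>The three error sources: the factor (1 - 2^-m)^(n-r-1) of the level events, the rest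
  reaching 2^m inside the boundary events, and r + 2 values \<ge> 2^(m-n).\<close>
definition error_const :: real where
  "error_const = real (n choose (r + 1)) * (n - (r + 1)) * (1 + 2 * (2 ^ (r + 1) - 1))
     + real (n choose (r + 2)) * 2 ^ ((n + 1) * (r + 2))"

lemma error_const_nonneg: "0 \<le> error_const"
  using one_le_power[of "2::real" "r + 1"] unfolding error_const_def by simp

lemma prob_trimmed_sum_gt_lower:
  assumes m: "1 \<le> m" and x: "x < 2 ^ (m + 1)"
  defines "e \<equiv> 1 / (2::real) ^ m" and "C \<equiv> real (n choose (r + 1))" and "c \<equiv> (2::real) ^ (r + 1) - 1"
  shows "C * e ^ (r + 1) * (1 + c * rest_tail m x) - error_const * e ^ (r + 2)
     \<le> prob {\<omega>\<in>space M. x < trimmed_sum X n r \<omega>}"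
proof -
  let ?F = "subsets_card (r + 1)" and ?k = "real (n - (r + 1))"
  have e: "0 < e" "e \<le> 1" unfolding e_def by auto
  have c: "0 \<le> c" unfolding c_def using one_le_power[of "2::real" "r + 1"] by simp
  have "1 - ?k * e \<le> (1 - e) ^ (n - (r + 1))"
    using Bernoulli_inequality[of "-e" "n - (r + 1)"] e by simp
  then have "C * e ^ (r + 1) * (1 - ?k * e) \<le> C * e ^ (r + 1) * (1 - e) ^ (n - (r + 1))"
    using e unfolding C_def by (intro mult_left_mono) auto
  also have "\<dots> = (\<Sum>T\<in>?F. e ^ (r + 1) * (1 - e) ^ (n - (r + 1)))"
    unfolding C_def by (simp add: card_subsets_card)
  also have "\<dots> = (\<Sum>T\<in>?F. prob (level_event (m + 1) T))"
    using prob_level_event m unfolding e_def by simp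
  finally have level: "C * e ^ (r + 1) * (1 - ?k * e) \<le> (\<Sum>T\<in>?F. prob (level_event (m + 1) T))" .
  have "(\<Sum>T\<in>?F. c * e ^ (r + 1) * (rest_tail m x - ?k * (2 * e))) \<le> (\<Sum>T\<in>?F. prob (boundary_event m x T))"
    using prob_boundary_event_bounds(2)[OF _ m, of _ x] unfolding c_def e_def
    by (intro sum_mono) (simp add: mult.assoc)
  then have boundary: "C * c * e ^ (r + 1) * (rest_tail m x - ?k * (2 * e))
      \<le> (\<Sum>T\<in>?F. prob (boundary_event m x T))"
    unfolding C_def by (simp add: card_subsets_card algebra_simps)
  have "C * e ^ (r + 1) * (1 + c * rest_tail m x) - (C * ?k + 2 * c * C * ?k) * e ^ (r + 2)
      \<le> prob {\<omega>\<in>space M. x < trimmed_sum X n r \<omega>}"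
    using prob_trimmed_sum_gt_ge_sum[OF m x] level boundary by (simp add: algebra_simps)
  moreover have "(C * ?k + 2 * c * C * ?k) * e ^ (r + 2) \<le> error_const * e ^ (r + 2)"
    using e unfolding error_const_def C_def c_def by (intro mult_right_mono) (auto simp: algebra_simps)
  ultimately show ?thesis by linarith
qed

lemma prob_trimmed_sum_gt_upper:
  assumes m: "n + 1 \<le> m" and x: "2 ^ m \<le> x"
  defines "e \<equiv> 1 / (2::real) ^ m" and "C \<equiv> real (n choose (r + 1))" and "c \<equiv> (2::real) ^ (r + 1) - 1"
  shows "prob {\<omega>\<in>space M. x < trimmed_sum X n r \<omega>}
     \<le> C * e ^ (r + 1) * (1 + c * rest_tail m x) + error_const * e ^ (r + 2)"
proof -
  have m1: "1 \<le> m" using m by simp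
  have e: "0 < e" unfolding e_def by simp
  have "(2::real) / 2 ^ (m - n) = 2 ^ (n + 1) * e"
  proof -
    have "(2::real) ^ m = 2 ^ n * 2 ^ (m - n)" using m by (simp add: power_add[symmetric])
    then show ?thesis unfolding e_def by (simp add: field_simps)
  qed
  then have "(\<Sum>U\<in>subsets_card (r + 2). prob (all_ge_event (m - n) U))
      = (\<Sum>U\<in>subsets_card (r + 2). (2 ^ (n + 1) * e) ^ (r + 2))"
    using prob_all_ge_event m by (intro sum.cong) (auto simp: subsets_card_def)
  also have "\<dots> = real (n choose (r + 2)) * ((2 ^ (n + 1)) ^ (r + 2) * e ^ (r + 2))"
    by (simp add: card_subsets_card power_mult_distrib)
  also have "((2::real) ^ (n + 1)) ^ (r + 2) = 2 ^ ((n + 1) * (r + 2))" by (rule power_mult[symmetric])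
  finally have many: "(\<Sum>U\<in>subsets_card (r + 2). prob (all_ge_event (m - n) U))
      = real (n choose (r + 2)) * 2 ^ ((n + 1) * (r + 2)) * e ^ (r + 2)" by (simp only: mult.assoc)
  have "(\<Sum>T\<in>subsets_card (r + 1). prob (all_ge_event (m + 1) T)) = (\<Sum>T\<in>subsets_card (r + 1). e ^ (r + 1))"
    using prob_all_ge_event unfolding e_def by (intro sum.cong) (auto simp: subsets_card_def)
  then have high: "(\<Sum>T\<in>subsets_card (r + 1). prob (all_ge_event (m + 1) T)) = C * e ^ (r + 1)"
    unfolding C_def by (simp add: card_subsets_card)
  have "(\<Sum>T\<in>subsets_card (r + 1). prob (boundary_event m x T))
      \<le> (\<Sum>T\<in>subsets_card (r + 1). c * e ^ (r + 1) * rest_tail m x)"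
    using prob_boundary_event_bounds(1)[OF _ m1, of _ x] unfolding c_def e_def by (intro sum_mono) simp
  then have boundary: "(\<Sum>T\<in>subsets_card (r + 1). prob (boundary_event m x T)) \<le> C * c * e ^ (r + 1) * rest_tail m x"
    unfolding C_def by (simp add: card_subsets_card algebra_simps)
  have "real (n choose (r + 2)) * 2 ^ ((n + 1) * (r + 2)) * e ^ (r + 2) \<le> error_const * e ^ (r + 2)"
    using e one_le_power[of "2::real" "r + 1"] unfolding error_const_def by (intro mult_right_mono) auto
  then show ?thesis
    using prob_trimmed_sum_gt_le_sum[OF m x] many high boundary by (simp add: algebra_simps)
qed

section \<open>Asymptotics of the tail\<close>

definition trimmed_tail :: "real \<Rightarrow> real" where
  "trimmed_tail x = prob {\<omega> \<in> space M. trimmed_sum X n r \<omega> > x}"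

definition partial_tail :: "real \<Rightarrow> real" where
  "partial_tail x = prob {\<omega> \<in> space M. partial_sum X (n - r - 1) \<omega> > x * (1 - 2 powr (- frac (log 2 x)))}"

definition trimmed_tail_approx :: "real \<Rightarrow> real" where
  "trimmed_tail_approx x = 2 powr (real (r + 1) * frac (log 2 x)) / x ^ (r + 1) * real (n choose (r + 1)) *
     (1 + partial_tail x * (2 ^ (r + 1) - 1))"

lemma trimmed_tail_approx_pos:
  assumes "0 < x"
  shows "0 < trimmed_tail_approx x"
proof -
  have "0 \<le> partial_tail x * (2 ^ (r + 1) - 1)"
    using one_le_power[of "2::real" "r + 1"] unfolding partial_tail_def by simp
  then show ?thesis
    using assms r_less_n unfolding trimmed_tail_approx_def by (simp add: zero_less_binomial)
qed

lemma trimmed_tail_rel_error: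
  assumes x: "2 ^ (n + 1) \<le> x"
  shows "\<bar>trimmed_tail x / trimmed_tail_approx x - 1\<bar> \<le> 2 * error_const / real (n choose (r + 1)) / x"
proof -
  define m where "m = nat \<lfloor>log 2 x\<rfloor>"
  define e where "e = 1 / (2::real) ^ m"
  define C where "C = real (n choose (r + 1))"
  define c where "c = (2::real) ^ (r + 1) - 1"
  note level = floor_log2_props[OF x, folded m_def]
  have xpos: "0 < x" using less_le_trans[OF zero_less_power[of "2::real" "n + 1"] x] by simp
  have e: "0 < e" "e \<le> 2 / x" using level(3) xpos unfolding e_def by (auto simp: field_simps)
  have C: "0 < C" unfolding C_def using r_less_n by (simp add: zero_less_binomial)
  have approx: "trimmed_tail_approx x = C * e ^ (r + 1) * (1 + c * rest_tail m x)"
  proof -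
    have "partial_tail x = rest_tail m x"
      unfolding partial_tail_def rest_tail_def level(5) by (simp add: diff_diff_add)
    moreover have "2 powr (real (r + 1) * frac (log 2 x)) / x ^ (r + 1) = e ^ (r + 1)"
      unfolding level(4)[of "r + 1"] e_def using xpos by (simp add: power_divide)
    ultimately show ?thesis unfolding trimmed_tail_approx_def C_def c_def by (simp add: algebra_simps)
  qed
  have "\<bar>trimmed_tail x - trimmed_tail_approx x\<bar> \<le> error_const * e ^ (r + 2)"
    using prob_trimmed_sum_gt_lower[of m x] prob_trimmed_sum_gt_upper[of m x] level(1-3)
    unfolding approx trimmed_tail_def e_def C_def c_def by (simp add: abs_le_iff)
  moreover have "C * e ^ (r + 1) \<le> trimmed_tail_approx x"
  proof -
    have "1 \<le> 1 + c * rest_tail m x"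
      using one_le_power[of "2::real" "r + 1"] unfolding c_def rest_tail_def by simp
    from mult_left_mono[OF this, of "C * e ^ (r + 1)"] show ?thesis using C e unfolding approx by simp
  qed
  moreover have "0 < C * e ^ (r + 1)" using C e by simp
  ultimately have "\<bar>trimmed_tail x / trimmed_tail_approx x - 1\<bar> \<le> error_const * e ^ (r + 2) / (C * e ^ (r + 1))"
    by (rule abs_divide_minus_one_le)
  also have "\<dots> = error_const * e / C" using e C by (simp add: field_simps)
  also have "\<dots> \<le> error_const * (2 / x) / C"
    using e C error_const_nonneg by (intro divide_right_mono mult_left_mono) auto
  also have "\<dots> = 2 * error_const / C / x" by (simp add: ac_simps)
  finally show ?thesis unfolding C_def .
qed

lemma trimmed_tail_ratio_tendsto: "((\<lambda>x. trimmed_tail x / trimmed_tail_approx x) \<longlongrightarrow> 1) at_top"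
proof (rule tendsto_if_abs_diff_le_div)
  show "eventually (\<lambda>x. \<bar>trimmed_tail x / trimmed_tail_approx x - 1\<bar>
      \<le> 2 * error_const / real (n choose (r + 1)) / x) at_top"
    using eventually_ge_at_top[of "2 ^ (n + 1) :: real"] by (rule eventually_mono) (rule trimmed_tail_rel_error)
qed (rule order.refl)

lemma trimmed_tail_asymp_equiv: "trimmed_tail \<sim>[at_top] trimmed_tail_approx"
  by (rule asymp_equivI'[OF trimmed_tail_ratio_tendsto])

lemma partial_tail_tendsto_zero:
  assumes "0 < \<delta>"
  shows "(partial_tail \<longlongrightarrow> 0) (at_top \<sqinter> principal {x. frac (log 2 x) > \<delta>})"
proof (rule tendsto_if_abs_diff_le_div)
  define \<beta> where "\<beta> = 1 - 2 powr (-\<delta>)"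
  have \<beta>: "0 < \<beta>" unfolding \<beta>_def using assms by (simp add: powr_minus field_simps)
  define k where "k = n - r - 1"
  show "eventually (\<lambda>x. \<bar>partial_tail x - 0\<bar> \<le> (2 * real k ^ 2 / \<beta>) / x)
      (at_top \<sqinter> principal {x. frac (log 2 x) > \<delta>})"
    unfolding eventually_inf_principal using eventually_gt_at_top[of 0]
  proof eventually_elim
    case (elim x)
    show ?case
    proof
      assume "x \<in> {x. frac (log 2 x) > \<delta>}"
      then have "2 powr (- frac (log 2 x)) \<le> 2 powr (-\<delta>)" by simp
      then have y: "x * \<beta> \<le> x * (1 - 2 powr (- frac (log 2 x)))"
        unfolding \<beta>_def using elim by simp
      have "partial_tail x \<le> 2 * real (card {1..k}) ^ 2 / (x * (1 - 2 powr (- frac (log 2 x))))"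
        unfolding partial_tail_def partial_sum_def k_def
        using prob_sum_gt_le[of "{1..n - r - 1}"] y \<beta> elim by simp
      also have "\<dots> \<le> 2 * real k ^ 2 / (x * \<beta>)"
        using y \<beta> elim by (simp add: frac_le)
      also have "\<dots> = (2 * real k ^ 2 / \<beta>) / x" by simp
      finally show "\<bar>partial_tail x - 0\<bar> \<le> (2 * real k ^ 2 / \<beta>) / x"
        by (simp add: partial_tail_def)
    qed
  qed
qed simp

lemma trimmed_tail_approx_normalized:
  assumes "0 < x"
  shows "trimmed_tail_approx x * x ^ (r + 1) / 2 powr (real (r + 1) * frac (log 2 x))
    = real (n choose (r + 1)) * (1 + partial_tail x * (2 ^ (r + 1) - 1))"
  using assms unfolding trimmed_tail_approx_def by (simp add: field_simps)

lemma trimmed_tail_normalized_tendsto: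
  assumes "0 < \<delta>"
  shows "((\<lambda>x. trimmed_tail x * x ^ (r + 1) / 2 powr (real (r + 1) * frac (log 2 x)))
           \<longlongrightarrow> real (n choose (r + 1))) (at_top \<sqinter> principal {x. frac (log 2 x) > \<delta>})"
    (is "(_ \<longlongrightarrow> _) ?F")
proof -
  let ?C = "real (n choose (r + 1))" and ?c = "(2::real) ^ (r + 1) - 1"
  have "((\<lambda>x. trimmed_tail x / trimmed_tail_approx x) \<longlongrightarrow> 1) ?F"
    using trimmed_tail_ratio_tendsto by (rule tendsto_mono[rotated]) simp
  moreover have "((\<lambda>x. ?C * (1 + partial_tail x * ?c)) \<longlongrightarrow> ?C * (1 + 0 * ?c)) ?F"
    by (intro tendsto_intros partial_tail_tendsto_zero assms)
  ultimately have "((\<lambda>x. trimmed_tail x / trimmed_tail_approx x * (?C * (1 + partial_tail x * ?c)))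
      \<longlongrightarrow> 1 * (?C * (1 + 0 * ?c))) ?F"
    by (rule tendsto_mult)
  then have lim: "((\<lambda>x. trimmed_tail x / trimmed_tail_approx x * (?C * (1 + partial_tail x * ?c)))
      \<longlongrightarrow> ?C) ?F" by (simp only: mult_zero_left add_0_right mult_1_right mult_1_left)
  have "eventually (\<lambda>x. trimmed_tail x / trimmed_tail_approx x * (?C * (1 + partial_tail x * ?c))
      = trimmed_tail x * x ^ (r + 1) / 2 powr (real (r + 1) * frac (log 2 x))) ?F"
    using eventually_gt_at_top[of 0] unfolding eventually_inf_principal
  proof eventually_elim
    case (elim x)
    have "trimmed_tail x / trimmed_tail_approx x * (?C * (1 + partial_tail x * ?c))
        = trimmed_tail x / trimmed_tail_approx x *
          (trimmed_tail_approx x * x ^ (r + 1) / 2 powr (real (r + 1) * frac (log 2 x)))"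
      unfolding trimmed_tail_approx_normalized[OF elim] ..
    also have "\<dots> = trimmed_tail x * x ^ (r + 1) / 2 powr (real (r + 1) * frac (log 2 x))"
      using trimmed_tail_approx_pos[OF elim] by (simp add: less_imp_neq[symmetric])
    finally show ?case by (intro impI)
  qed
  from Lim_transform_eventually[OF lim this] show ?thesis .
qed

end

theorem theorem1:
  fixes M :: "'a measure" and X :: "nat \<Rightarrow> 'a \<Rightarrow> real" and n r :: nat
  assumes "prob_space M"
    and "\<And>i. i \<ge> 1 \<Longrightarrow> X i \<in> borel_measurable M"
    and "prob_space.indep_vars M (\<lambda>_. borel) X {1..}"
    and "\<And>i k. i \<ge> 1 \<Longrightarrow> k \<ge> 1 \<Longrightarrow>
           measure M {\<omega> \<in> space M. X i \<omega> = 2 ^ k} = 1 / 2 ^ k"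
    and "r < n"
  shows "(\<lambda>x::real. measure M {\<omega> \<in> space M. trimmed_sum X n r \<omega> > x})
           \<sim>[at_top]
         (\<lambda>x::real. 2 powr (real (r+1) * frac (log 2 x)) / x ^ (r+1) * real (n choose (r+1)) *
            (1 + measure M {\<omega> \<in> space M.
                   partial_sum X (n - r - 1) \<omega> > x * (1 - 2 powr (- frac (log 2 x)))}
                 * (2 ^ (r+1) - 1))) \<and>
         (\<forall>\<delta>::real. 0 < \<delta> \<and> \<delta> < 1 \<longrightarrow>
           ((\<lambda>x::real. measure M {\<omega> \<in> space M. trimmed_sum X n r \<omega> > x}
                 * x ^ (r+1) / 2 powr (real (r+1) * frac (log 2 x)))
            \<longlongrightarrow> real (n choose (r+1))) (at_top \<sqinter> principal {x. frac (log 2 x) > \<delta>}))"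
proof -
  interpret prob_space M by (rule assms(1))
  interpret st_petersburg_trimmed M X n r
    by unfold_locales (use assms in auto)
  have "trimmed_tail \<sim>[at_top] trimmed_tail_approx"
    by (rule trimmed_tail_asymp_equiv)
  moreover have "\<forall>\<delta>::real. 0 < \<delta> \<and> \<delta> < 1 \<longrightarrow>
      ((\<lambda>x. trimmed_tail x * x ^ (r + 1) / 2 powr (real (r + 1) * frac (log 2 x)))
        \<longlongrightarrow> real (n choose (r + 1))) (at_top \<sqinter> principal {x. frac (log 2 x) > \<delta>})"
    by (intro allI impI trimmed_tail_normalized_tendsto) simp
  ultimately show ?thesis
    unfolding trimmed_tail_def[abs_def] trimmed_tail_approx_def[abs_def] partial_tail_def by (rule conjI)
qed

end
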